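(* Assume $\lambda<1-\frac1d$ and let $x^\star$ be the unique fixed point. For every fluid solution $x$ there exist constants $\alpha>0$ and $\beta>0$, independent of $t$, such that $\|x(t)-x^\star\|\le\alpha e^{-\beta t}$ for all $t\ge0$, where $\|\cdot\|$ is the Euclidean norm.
   Context: Fix $\lambda\in(0,1)$, an integer $d\ge2$ and an integer $I>1$. $\mathcal S=\{x=(x_{i,j})_{0\le i\le j\le I}: x_{i,j}\ge0,\ \sum_{i=0}^I\sum_{j=i}^I x_{i,j}=1\}$; $x_{i,\cdot}=\sum_{j=i}^I x_{i,j}$, $x_{\cdot,j}=\sum_{i=0}^j x_{i,j}$. For $0\le j\le I$: $\mathcal R_j(x)=\max\{0,\lambda(1-d\sum_{i=0}^j(j+1-i)x_{i,\cdot})\}\,\mathbf 1\{\sum_{i=0}^j x_{\cdot,i}=0\}$, $\mathcal G_j(x)=\lambda d\,\mathbf 1\{\sum_{i=0}^j x_{\cdot,i}=0,\ d\sum_{i=0}^j(j+1-i)x_{i,\cdot}\le1\}\sum_{i=0}^j x_{i,\cdot}$. Write $\rho_k^{a,b}(x)=\mathcal R_k(x)\frac{x_{a,b}}{x_{\cdot,b}}\mathbf 1\{x_{\cdot,b}>0\}$ (equal to $0$ when $x_{\cdot,b}=0$). The drift $b(x)$ is: $b_{0,0}=\lambda d(x_{0,\cdot}-x_{0,0})-\lambda+\mathcal R_0(x)$; for $i<j$: $b_{i,j}=x_{i+1,j}-\mathbf 1\{i>0\}x_{i,j}-\lambda d x_{i,j}-\rho_{j-1}^{i,j}+\mathbf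 1\{i>0\}\rho_{j-2}^{i-1,j-1}+\mathbf 1\{j=I,i>0\}\rho_{I-1}^{i-1,I}$; $b_{1,1}=-x_{1,1}+\lambda d(x_{1,\cdot}-x_{1,1})+\lambda-\mathcal R_0(x)-\rho_0^{1,1}-\mathcal G_1(x)$; for $2\le i\le I-1$: $b_{i,i}=-x_{i,i}+\lambda d(x_{i,\cdot}-x_{i,i})-\rho_{i-1}^{i,i}+\rho_{i-2}^{i-1,i-1}+\mathcal G_{i-1}(x)-\mathcal G_i(x)$; $b_{I,I}=-x_{I,I}+\rho_{I-2}^{I-1,I-1}+\mathcal G_{I-1}(x)+\rho_{I-1}^{I-1,I}$. A fluid solution is an absolutely continuous $x:\mathbb R_+\to\mathcal S$ with $\dot x_{i,j}(t)=b_{i,j}(x(t))$ for a.e. $t$ and all $i\le j$. A fixed point is a fluid solution with $b(x(t))=0$ for all $t\ge0$ (hence constant, identified with a point of $\mathcal S$); for $\lambda<1-1/d$ it is $x^\star_{0,0}=1-\lambda-1/d$, $x^\star_{0,1}=1/d$, $x^\star_{1,1}=\lambda$, other coordinates $0$. *)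

theory Defs
  imports "HOL-Analysis.Analysis"
begin

text \<open>States are functions x :: nat => nat => real; only the coordinates (i,j)
  with 0 <= i <= j <= I are meaningful, the others are required to be 0.\<close>

definition idx :: "nat \<Rightarrow> (nat \<times> nat) set" where
  "idx I = {(i, j). i \<le> j \<and> j \<le> I}"

definition simplexS :: "nat \<Rightarrow> (nat \<Rightarrow> nat \<Rightarrow> real) set" where
  "simplexS I = {x. (\<forall>i j. (i, j) \<notin> idx I \<longrightarrow> x i j = 0)
                  \<and> (\<forall>i j. x i j \<ge> 0)
                  \<and> (\<Sum>i=0..I. \<Sum>j=i..I. x i j) = 1}"

definition xrow :: "nat \<Rightarrow> (nat \<Rightarrow> nat \<Rightarrow> real) \<Rightarrow> nat \<Rightarrow> real" where
  "xrow I x i = (\<Sum>j=i..I. x i j)"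

definition xcol :: "(nat \<Rightarrow> nat \<Rightarrow> real) \<Rightarrow> nat \<Rightarrow> real" where
  "xcol x j = (\<Sum>i=0..j. x i j)"

definition Rf :: "real \<Rightarrow> nat \<Rightarrow> nat \<Rightarrow> nat \<Rightarrow> (nat \<Rightarrow> nat \<Rightarrow> real) \<Rightarrow> real" where
  "Rf lam d I j x =
     (if (\<Sum>i=0..j. xcol x i) = 0
      then max 0 (lam * (1 - real d * (\<Sum>i=0..j. real (j + 1 - i) * xrow I x i)))
      else 0)"

definition Gf :: "real \<Rightarrow> nat \<Rightarrow> nat \<Rightarrow> nat \<Rightarrow> (nat \<Rightarrow> nat \<Rightarrow> real) \<Rightarrow> real" where
  "Gf lam d I j x =
     lam * real d *
     (if (\<Sum>i=0..j. xcol x i) = 0 \<and> real d * (\<Sum>i=0..j. real (j + 1 - i) * xrow I x i) \<le> 1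
      then 1 else 0) * (\<Sum>i=0..j. xrow I x i)"

definition rho :: "real \<Rightarrow> nat \<Rightarrow> nat \<Rightarrow> nat \<Rightarrow> nat \<Rightarrow> nat \<Rightarrow> (nat \<Rightarrow> nat \<Rightarrow> real) \<Rightarrow> real" where
  "rho lam d I k a b x = (if xcol x b > 0 then Rf lam d I k x * x a b / xcol x b else 0)"

definition drift :: "real \<Rightarrow> nat \<Rightarrow> nat \<Rightarrow> (nat \<Rightarrow> nat \<Rightarrow> real) \<Rightarrow> nat \<Rightarrow> nat \<Rightarrow> real" where
  "drift lam d I x i j =
    (if i = 0 \<and> j = 0 then
       lam * real d * (xrow I x 0 - x 0 0) - lam + Rf lam d I 0 x
     else if i < j then
       x (i + 1) j - (if i > 0 then x i j else 0) - lam * real d * x i j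
       - rho lam d I (j - 1) i j x
       + (if i > 0 then rho lam d I (j - 2) (i - 1) (j - 1) x else 0)
       + (if j = I \<and> i > 0 then rho lam d I (I - 1) (i - 1) I x else 0)
     else if i = 1 \<and> j = 1 then
       - x 1 1 + lam * real d * (xrow I x 1 - x 1 1) + lam - Rf lam d I 0 x
       - rho lam d I 0 1 1 x - Gf lam d I 1 x
     else if i = j \<and> 2 \<le> i \<and> i \<le> I - 1 then
       - x i i + lam * real d * (xrow I x i - x i i)
       - rho lam d I (i - 1) i i x + rho lam d I (i - 2) (i - 1) (i - 1) x
       + Gf lam d I (i - 1) x - Gf lam d I i x
     else if i = I \<and> j = I then
       - x I I + rho lam d I (I - 2) (I - 1) (I - 1) x + Gf lam d I (I - 1) x
       + rho lam d I (I - 1) (I - 1) I x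
     else 0)"

definition abs_cont_on_interval :: "(real \<Rightarrow> real) \<Rightarrow> real \<Rightarrow> real \<Rightarrow> bool" where
  "abs_cont_on_interval f a b \<longleftrightarrow>
     (\<forall>\<epsilon>>0. \<exists>\<delta>>0. \<forall>(n::nat) (l::nat \<Rightarrow> real) (r::nat \<Rightarrow> real).
        (\<forall>k<n. a \<le> l k \<and> l k \<le> r k \<and> r k \<le> b)
        \<and> (\<forall>k<n. \<forall>m<n. k \<noteq> m \<longrightarrow> r k \<le> l m \<or> r m \<le> l k)
        \<and> (\<Sum>k<n. r k - l k) < \<delta>
        \<longrightarrow> (\<Sum>k<n. \<bar>f (r k) - f (l k)\<bar>) < \<epsilon>)"

definition fluid_solution :: "real \<Rightarrow> nat \<Rightarrow> nat \<Rightarrow> (real \<Rightarrow> nat \<Rightarrow> nat \<Rightarrow> real) \<Rightarrow> bool" where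
  "fluid_solution lam d I x \<longleftrightarrow>
     (\<forall>t\<ge>0. x t \<in> simplexS I)
     \<and> (\<forall>i j T. (i, j) \<in> idx I \<longrightarrow> T \<ge> 0 \<longrightarrow> abs_cont_on_interval (\<lambda>t. x t i j) 0 T)
     \<and> (AE t in lborel. t \<ge> 0 \<longrightarrow>
          (\<forall>i j. (i, j) \<in> idx I \<longrightarrow>
             ((\<lambda>s. x s i j) has_real_derivative drift lam d I (x t) i j) (at t)))"

definition xstar :: "real \<Rightarrow> nat \<Rightarrow> nat \<Rightarrow> nat \<Rightarrow> real" where
  "xstar lam d i j =
     (if i = 0 \<and> j = 0 then 1 - lam - 1 / real d
      else if i = 0 \<and> j = 1 then 1 / real d
      else if i = 1 \<and> j = 1 then lam
      else 0)"

definition state_dist :: "nat \<Rightarrow> (nat \<Rightarrow> nat \<Rightarrow> real) \<Rightarrow> (nat \<Rightarrow> nat \<Rightarrow> real) \<Rightarrow> real" where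
  "state_dist I x y = sqrt (\<Sum>(i, j)\<in>idx I. (x i j - y i j)\<^sup>2)"

end

theory Submission
  imports Defs
begin

text \<open>
  First, Lyapunov functions built from linear functionals of the
  state show that after a finite time the fraction \<open>x\<^sub>0\<^sub>,\<^sub>\<cdot>\<close> of states with \<open>i = 0\<close> stays
  at least \<open>1/d\<close>; this uses \<open>\<lambda> < 1 - 1/d\<close>. In that saturated regime all routing rates
  \<open>R\<^sub>k\<close> and \<open>G\<^sub>k\<close> vanish and the drift becomes affine and triangular in the deviation
  \<open>x - x\<^sup>\<star>\<close>: each coordinate relaxes at a positive rate towards a forcing term made of
  coordinates of smaller rank. Induction on the rank then gives exponential decay of every
  coordinate, the coordinate \<open>(0,0)\<close> following from conservation of mass.

  Fluid solutions are only absolutely continuous, so the comparison arguments rest on the fact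
  that an absolutely continuous function with almost everywhere nonpositive derivative is
  nonincreasing, which is a consequence of Cousin's lemma.
\<close>

section \<open>Absolutely continuous functions on an interval\<close>

lemma abs_cont_on_intervalD:
  assumes "abs_cont_on_interval f a b" "e > 0"
  obtains \<delta> where "\<delta> > 0" "\<And>(n::nat) l r. (\<forall>k<n. a \<le> l k \<and> l k \<le> r k \<and> r k \<le> b) \<Longrightarrow>
      (\<forall>k<n. \<forall>m<n. k \<noteq> m \<longrightarrow> r k \<le> l m \<or> r m \<le> l k) \<Longrightarrow> (\<Sum>k<n. r k - l k) < \<delta> \<Longrightarrow>
      (\<Sum>k<n. \<bar>f (r k) - f (l k)\<bar>) < e"
proof -
  from assms(1)[unfolded abs_cont_on_interval_def, rule_format, OF assms(2)]
  obtain \<delta> where "\<delta> > 0" and small: "\<forall>(n::nat) l r. (\<forall>k<n. a \<le> l k \<and> l k \<le> r k \<and> r k \<le> b) \<and>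
      (\<forall>k<n. \<forall>m<n. k \<noteq> m \<longrightarrow> r k \<le> l m \<or> r m \<le> l k) \<and> (\<Sum>k<n. r k - l k) < \<delta> \<longrightarrow>
      (\<Sum>k<n. \<bar>f (r k) - f (l k)\<bar>) < e"
    by (elim exE conjE)
  show ?thesis
    by (rule that[OF \<open>\<delta> > 0\<close>]) (rule small[rule_format], intro conjI)
qed

lemma abs_cont_on_intervalI:
  assumes "\<And>e. e > 0 \<Longrightarrow> \<exists>\<delta>>0. \<forall>(n::nat) l r. (\<forall>k<n. a \<le> l k \<and> l k \<le> r k \<and> r k \<le> b) \<longrightarrow>
      (\<forall>k<n. \<forall>m<n. k \<noteq> m \<longrightarrow> r k \<le> l m \<or> r m \<le> l k) \<longrightarrow> (\<Sum>k<n. r k - l k) < \<delta> \<longrightarrow>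
      (\<Sum>k<n. \<bar>f (r k) - f (l k)\<bar>) < e"
  shows "abs_cont_on_interval f a b"
  unfolding abs_cont_on_interval_def
proof (intro allI impI)
  fix e :: real assume "e > 0"
  from assms[OF this] obtain \<delta> where "\<delta> > 0" and small: "\<forall>(n::nat) l r. (\<forall>k<n. a \<le> l k \<and> l k \<le> r k \<and> r k \<le> b) \<longrightarrow>
      (\<forall>k<n. \<forall>m<n. k \<noteq> m \<longrightarrow> r k \<le> l m \<or> r m \<le> l k) \<longrightarrow> (\<Sum>k<n. r k - l k) < \<delta> \<longrightarrow>
      (\<Sum>k<n. \<bar>f (r k) - f (l k)\<bar>) < e"
    by (elim exE conjE)
  show "\<exists>\<delta>>0. \<forall>(n::nat) l r. (\<forall>k<n. a \<le> l k \<and> l k \<le> r k \<and> r k \<le> b) \<and>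
      (\<forall>k<n. \<forall>m<n. k \<noteq> m \<longrightarrow> r k \<le> l m \<or> r m \<le> l k) \<and> (\<Sum>k<n. r k - l k) < \<delta> \<longrightarrow>
      (\<Sum>k<n. \<bar>f (r k) - f (l k)\<bar>) < e"
    using \<open>\<delta> > 0\<close> small by (intro exI[of _ \<delta>]) auto
qed

lemma abs_cont_on_interval_finite_familyD:
  assumes "abs_cont_on_interval f a b" "e > 0"
  obtains \<delta> where "\<delta> > 0" "\<And>(S :: 'i set) l r. finite S \<Longrightarrow> (\<forall>k\<in>S. a \<le> l k \<and> l k \<le> r k \<and> r k \<le> b) \<Longrightarrow>
      (\<forall>k\<in>S. \<forall>m\<in>S. k \<noteq> m \<longrightarrow> r k \<le> l m \<or> r m \<le> l k) \<Longrightarrow> (\<Sum>k\<in>S. r k - l k) < \<delta> \<Longrightarrow>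
      (\<Sum>k\<in>S. \<bar>f (r k) - f (l k)\<bar>) < e"
proof -
  obtain \<delta> where \<delta>: "\<delta> > 0" and small: "\<And>(n::nat) l r. (\<forall>k<n. a \<le> l k \<and> l k \<le> r k \<and> r k \<le> b) \<Longrightarrow>
      (\<forall>k<n. \<forall>m<n. k \<noteq> m \<longrightarrow> r k \<le> l m \<or> r m \<le> l k) \<Longrightarrow> (\<Sum>k<n. r k - l k) < \<delta> \<Longrightarrow>
      (\<Sum>k<n. \<bar>f (r k) - f (l k)\<bar>) < e"
    using abs_cont_on_intervalD[OF assms] by blast
  have family: "(\<Sum>k\<in>S. \<bar>f (r k) - f (l k)\<bar>) < e"
    if S: "finite (S :: 'i set)" and lr: "\<forall>k\<in>S. a \<le> l k \<and> l k \<le> r k \<and> r k \<le> b"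
      and disj: "\<forall>k\<in>S. \<forall>m\<in>S. k \<noteq> m \<longrightarrow> r k \<le> l m \<or> r m \<le> l k"
      and len: "(\<Sum>k\<in>S. r k - l k) < \<delta>" for S l r
  proof -
    obtain h where h: "bij_betw h {..<card S} S"
      using ex_bij_betw_nat_finite[OF S] by (auto simp: atLeast0LessThan)
    have reindex: "(\<Sum>k<card S. g (h k)) = (\<Sum>k\<in>S. g k)" for g :: "'i \<Rightarrow> real"
      using sum.reindex_bij_betw[OF h] .
    have "(\<Sum>k<card S. \<bar>f (r (h k)) - f (l (h k))\<bar>) < e"
    proof (rule small)
      show "\<forall>k<card S. a \<le> l (h k) \<and> l (h k) \<le> r (h k) \<and> r (h k) \<le> b"
        using lr bij_betwE[OF h] by auto
      show "\<forall>k<card S. \<forall>m<card S. k \<noteq> m \<longrightarrow> r (h k) \<le> l (h m) \<or> r (h m) \<le> l (h k)"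
      proof (intro allI impI)
        fix k m assume km: "k < card S" "m < card S" "k \<noteq> m"
        then have "h k \<noteq> h m" using h by (auto simp: bij_betw_def inj_on_def)
        then show "r (h k) \<le> l (h m) \<or> r (h m) \<le> l (h k)"
          using disj bij_betwE[OF h] km by auto
      qed
      show "(\<Sum>k<card S. r (h k) - l (h k)) < \<delta>"
        using len reindex[of "\<lambda>k. r k - l k"] by simp
    qed
    then show ?thesis using reindex[of "\<lambda>k. \<bar>f (r k) - f (l k)\<bar>"] by simp
  qed
  show ?thesis by (rule that[OF \<delta> family])
qed

lemma abs_cont_on_interval_dominated:
  assumes f: "abs_cont_on_interval f a b" and g: "abs_cont_on_interval g a b"
    and A: "A \<ge> 0" and B: "B \<ge> 0" and C: "C \<ge> 0"
    and dom: "\<And>s t. a \<le> s \<Longrightarrow> s \<le> t \<Longrightarrow> t \<le> b \<Longrightarrow>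
      \<bar>h t - h s\<bar> \<le> A * \<bar>f t - f s\<bar> + B * \<bar>g t - g s\<bar> + C * (t - s)"
  shows "abs_cont_on_interval h a b"
proof (rule abs_cont_on_intervalI)
  fix e :: real assume e: "e > 0"
  have eA: "e / (3 * (A + 1)) > 0" and eB: "e / (3 * (B + 1)) > 0" using e A B by simp_all
  obtain d1 where d1: "d1 > 0" "\<And>(n::nat) l r. (\<forall>k<n. a \<le> l k \<and> l k \<le> r k \<and> r k \<le> b) \<Longrightarrow>
      (\<forall>k<n. \<forall>m<n. k \<noteq> m \<longrightarrow> r k \<le> l m \<or> r m \<le> l k) \<Longrightarrow> (\<Sum>k<n. r k - l k) < d1 \<Longrightarrow>
      (\<Sum>k<n. \<bar>f (r k) - f (l k)\<bar>) < e / (3 * (A + 1))"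
    using abs_cont_on_intervalD[OF f eA] by blast
  obtain d2 where d2: "d2 > 0" "\<And>(n::nat) l r. (\<forall>k<n. a \<le> l k \<and> l k \<le> r k \<and> r k \<le> b) \<Longrightarrow>
      (\<forall>k<n. \<forall>m<n. k \<noteq> m \<longrightarrow> r k \<le> l m \<or> r m \<le> l k) \<Longrightarrow> (\<Sum>k<n. r k - l k) < d2 \<Longrightarrow>
      (\<Sum>k<n. \<bar>g (r k) - g (l k)\<bar>) < e / (3 * (B + 1))"
    using abs_cont_on_intervalD[OF g eB] by blast
  define \<delta> where "\<delta> = min (min d1 d2) (e / (3 * (C + 1)))"
  have "\<delta> > 0" using d1 d2 e C unfolding \<delta>_def by simp
  moreover have "(\<Sum>k<n. \<bar>h (r k) - h (l k)\<bar>) < e"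
    if lr: "\<forall>k<n. a \<le> l k \<and> l k \<le> r k \<and> r k \<le> b"
      and disj: "\<forall>k<n. \<forall>m<n. k \<noteq> m \<longrightarrow> r k \<le> l m \<or> r m \<le> l k"
      and len: "(\<Sum>k<n. r k - l k) < \<delta>" for n :: nat and l r
  proof -
    have Sf: "(\<Sum>k<n. \<bar>f (r k) - f (l k)\<bar>) < e / (3 * (A + 1))"
      using d1(2)[OF lr disj] len unfolding \<delta>_def by linarith
    have Sg: "(\<Sum>k<n. \<bar>g (r k) - g (l k)\<bar>) < e / (3 * (B + 1))"
      using d2(2)[OF lr disj] len unfolding \<delta>_def by linarith
    have Sid: "(\<Sum>k<n. r k - l k) < e / (3 * (C + 1))" using len unfolding \<delta>_def by linarith
    have "(\<Sum>k<n. \<bar>h (r k) - h (l k)\<bar>)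
        \<le> (\<Sum>k<n. A * \<bar>f (r k) - f (l k)\<bar> + B * \<bar>g (r k) - g (l k)\<bar> + C * (r k - l k))"
      by (intro sum_mono dom) (use lr in auto)
    also have "\<dots> = A * (\<Sum>k<n. \<bar>f (r k) - f (l k)\<bar>) + B * (\<Sum>k<n. \<bar>g (r k) - g (l k)\<bar>)
        + C * (\<Sum>k<n. r k - l k)"
      by (simp add: sum.distrib sum_distrib_left)
    also have "\<dots> \<le> A * (e / (3 * (A + 1))) + B * (e / (3 * (B + 1))) + C * (e / (3 * (C + 1)))"
      using Sf Sg Sid A B C by (intro add_mono mult_left_mono) auto
    also have "\<dots> < e"
    proof -
      have third: "X * (e / (3 * (X + 1))) < e / 3" if "X \<ge> 0" for X
        using that e by (simp add: field_simps)
      from third[OF A] third[OF B] third[OF C] show ?thesis by linarith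
    qed
    finally show ?thesis .
  qed
  ultimately show "\<exists>\<delta>>0. \<forall>(n::nat) l r. (\<forall>k<n. a \<le> l k \<and> l k \<le> r k \<and> r k \<le> b) \<longrightarrow>
      (\<forall>k<n. \<forall>m<n. k \<noteq> m \<longrightarrow> r k \<le> l m \<or> r m \<le> l k) \<longrightarrow> (\<Sum>k<n. r k - l k) < \<delta> \<longrightarrow>
      (\<Sum>k<n. \<bar>h (r k) - h (l k)\<bar>) < e"
    by blast
qed

lemma abs_cont_on_interval_subinterval:
  assumes "abs_cont_on_interval f a b" "a \<le> c" "d \<le> b"
  shows "abs_cont_on_interval f c d"
proof (rule abs_cont_on_intervalI)
  fix e :: real assume "e > 0"
  then obtain \<delta> where \<delta>: "\<delta> > 0" "\<And>(n::nat) l r. (\<forall>k<n. a \<le> l k \<and> l k \<le> r k \<and> r k \<le> b) \<Longrightarrow>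
      (\<forall>k<n. \<forall>m<n. k \<noteq> m \<longrightarrow> r k \<le> l m \<or> r m \<le> l k) \<Longrightarrow> (\<Sum>k<n. r k - l k) < \<delta> \<Longrightarrow>
      (\<Sum>k<n. \<bar>f (r k) - f (l k)\<bar>) < e"
    using abs_cont_on_intervalD[OF assms(1)] by blast
  have "(\<Sum>k<n. \<bar>f (r k) - f (l k)\<bar>) < e"
    if "\<forall>k<n. c \<le> l k \<and> l k \<le> r k \<and> r k \<le> d" "\<forall>k<n. \<forall>m<n. k \<noteq> m \<longrightarrow> r k \<le> l m \<or> r m \<le> l k"
      "(\<Sum>k<n. r k - l k) < \<delta>" for n :: nat and l r
  proof (rule \<delta>(2))
    show "\<forall>k<n. a \<le> l k \<and> l k \<le> r k \<and> r k \<le> b"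
    proof (intro allI impI)
      fix k assume "k < n"
      then have "c \<le> l k" "l k \<le> r k" "r k \<le> d" using that(1) by auto
      then show "a \<le> l k \<and> l k \<le> r k \<and> r k \<le> b" using assms(2,3) by linarith
    qed
  qed (use that in auto)
  then show "\<exists>\<delta>>0. \<forall>(n::nat) l r. (\<forall>k<n. c \<le> l k \<and> l k \<le> r k \<and> r k \<le> d) \<longrightarrow>
      (\<forall>k<n. \<forall>m<n. k \<noteq> m \<longrightarrow> r k \<le> l m \<or> r m \<le> l k) \<longrightarrow> (\<Sum>k<n. r k - l k) < \<delta> \<longrightarrow>
      (\<Sum>k<n. \<bar>f (r k) - f (l k)\<bar>) < e"
    using \<delta>(1) by blast
qed

lemma abs_cont_on_interval_const: "abs_cont_on_interval (\<lambda>t. c) a b"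
  unfolding abs_cont_on_interval_def by (auto intro!: exI[of _ 1])

lemma abs_cont_on_interval_lipschitz:
  assumes "K \<ge> 0" "\<And>s t. a \<le> s \<Longrightarrow> s \<le> t \<Longrightarrow> t \<le> b \<Longrightarrow> \<bar>f t - f s\<bar> \<le> K * (t - s)"
  shows "abs_cont_on_interval f a b"
  by (rule abs_cont_on_interval_dominated[OF abs_cont_on_interval_const abs_cont_on_interval_const
        order_refl order_refl assms(1)])
    (use assms(2) in auto)

lemma abs_cont_on_interval_add:
  assumes "abs_cont_on_interval f a b" "abs_cont_on_interval g a b"
  shows "abs_cont_on_interval (\<lambda>t. f t + g t) a b"
  by (rule abs_cont_on_interval_dominated[OF assms zero_le_one zero_le_one order_refl]) auto

lemma abs_cont_on_interval_diff:
  assumes "abs_cont_on_interval f a b" "abs_cont_on_interval g a b"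
  shows "abs_cont_on_interval (\<lambda>t. f t - g t) a b"
  by (rule abs_cont_on_interval_dominated[OF assms zero_le_one zero_le_one order_refl]) auto

lemma abs_cont_on_interval_cmult:
  assumes "abs_cont_on_interval f a b"
  shows "abs_cont_on_interval (\<lambda>t. c * f t) a b"
  by (rule abs_cont_on_interval_dominated[OF assms assms abs_ge_zero[of c] order_refl order_refl])
    (simp add: abs_mult flip: right_diff_distrib)

lemma abs_cont_on_interval_minus:
  assumes "abs_cont_on_interval f a b"
  shows "abs_cont_on_interval (\<lambda>t. - f t) a b"
  using abs_cont_on_interval_cmult[OF assms, of "-1"] by simp

lemma abs_cont_on_interval_sum:
  assumes "finite S" "\<And>i. i \<in> S \<Longrightarrow> abs_cont_on_interval (f i) a b"
  shows "abs_cont_on_interval (\<lambda>t. \<Sum>i\<in>S. f i t) a b"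
  using assms
proof (induction S rule: finite_induct)
  case empty
  then show ?case using abs_cont_on_interval_const[of 0] by simp
next
  case (insert x F)
  then show ?case using abs_cont_on_interval_add[of "f x" a b "\<lambda>t. \<Sum>i\<in>F. f i t"] by simp
qed

lemma abs_cont_on_interval_imp_continuous_on:
  assumes "abs_cont_on_interval f a b"
  shows "continuous_on {a..b} f"
  unfolding continuous_on_iff
proof (intro ballI allI impI)
  fix x e assume x: "x \<in> {a..b}" and e: "(e::real) > 0"
  obtain \<delta> where \<delta>: "\<delta> > 0" "\<And>(n::nat) l r. (\<forall>k<n. a \<le> l k \<and> l k \<le> r k \<and> r k \<le> b) \<Longrightarrow>
      (\<forall>k<n. \<forall>m<n. k \<noteq> m \<longrightarrow> r k \<le> l m \<or> r m \<le> l k) \<Longrightarrow> (\<Sum>k<n. r k - l k) < \<delta> \<Longrightarrow>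
      (\<Sum>k<n. \<bar>f (r k) - f (l k)\<bar>) < e"
    using abs_cont_on_intervalD[OF assms e] by blast
  have "dist (f y) (f x) < e" if y: "y \<in> {a..b}" "dist y x < \<delta>" for y
  proof -
    have "(\<Sum>k<Suc 0. \<bar>f (max x y) - f (min x y)\<bar>) < e"
      by (rule \<delta>(2)) (use x y in \<open>auto simp: dist_real_def\<close>)
    then show ?thesis by (cases "x \<le> y") (auto simp: dist_real_def min_def max_def abs_minus_commute)
  qed
  then show "\<exists>\<delta>>0. \<forall>y\<in>{a..b}. dist y x < \<delta> \<longrightarrow> dist (f y) (f x) < e"
    using \<delta>(1) by blast
qed

lemma abs_cont_on_interval_bounded:
  assumes "abs_cont_on_interval f a b"
  obtains B where "B > 0" "\<And>t. t \<in> {a..b} \<Longrightarrow> \<bar>f t\<bar> \<le> B"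
proof -
  have "bounded (f ` {a..b})"
    using abs_cont_on_interval_imp_continuous_on[OF assms] compact_continuous_image compact_imp_bounded
    by blast
  then show ?thesis using that unfolding bounded_pos by auto
qed

lemma abs_cont_on_interval_mult:
  assumes f: "abs_cont_on_interval f a b" and g: "abs_cont_on_interval g a b"
  shows "abs_cont_on_interval (\<lambda>t. f t * g t) a b"
proof -
  obtain F where F: "F > 0" "\<And>t. t \<in> {a..b} \<Longrightarrow> \<bar>f t\<bar> \<le> F"
    using abs_cont_on_interval_bounded[OF f] by blast
  obtain G where G: "G > 0" "\<And>t. t \<in> {a..b} \<Longrightarrow> \<bar>g t\<bar> \<le> G"
    using abs_cont_on_interval_bounded[OF g] by blast
  show ?thesis
  proof (rule abs_cont_on_interval_dominated[OF f g _ _ order_refl, of G F])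
    fix s t assume st: "a \<le> s" "s \<le> t" "t \<le> b"
    have split: "f t * g t - f s * g s = g t * (f t - f s) + f s * (g t - g s)"
      by (simp add: algebra_simps)
    have "\<bar>g t * (f t - f s)\<bar> \<le> G * \<bar>f t - f s\<bar>"
      using G(2)[of t] st by (simp add: abs_mult mult_right_mono)
    moreover have "\<bar>f s * (g t - g s)\<bar> \<le> F * \<bar>g t - g s\<bar>"
      using F(2)[of s] st by (simp add: abs_mult mult_right_mono)
    ultimately show "\<bar>f t * g t - f s * g s\<bar> \<le> G * \<bar>f t - f s\<bar> + F * \<bar>g t - g s\<bar> + 0 * (t - s)"
      unfolding split by linarith
  qed (use F G in auto)
qed

lemma abs_cont_on_interval_exp: "abs_cont_on_interval (\<lambda>t. exp (c * t)) a b"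
proof (rule abs_cont_on_interval_lipschitz[of "\<bar>c\<bar> * exp (\<bar>c\<bar> * (\<bar>a\<bar> + \<bar>b\<bar>))"])
  fix s t assume st: "a \<le> s" "s \<le> t" "t \<le> b"
  show "\<bar>exp (c * t) - exp (c * s)\<bar> \<le> \<bar>c\<bar> * exp (\<bar>c\<bar> * (\<bar>a\<bar> + \<bar>b\<bar>)) * (t - s)"
  proof (cases "s = t")
    case False
    then have lt: "s < t" using st by simp
    have "\<And>u. s \<le> u \<Longrightarrow> u \<le> t \<Longrightarrow> ((\<lambda>t. exp (c * t)) has_real_derivative (c * exp (c * u))) (at u)"
      by (auto intro!: derivative_eq_intros)
    from MVT2[OF lt this] obtain z where z: "s < z" "z < t"
      "exp (c * t) - exp (c * s) = (t - s) * (c * exp (c * z))"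
      by blast
    have "\<bar>z\<bar> \<le> \<bar>a\<bar> + \<bar>b\<bar>" using z st by auto
    then have "c * z \<le> \<bar>c\<bar> * (\<bar>a\<bar> + \<bar>b\<bar>)"
      by (metis abs_ge_self abs_mult abs_ge_zero mult_left_mono order_trans)
    then have "\<bar>c * exp (c * z)\<bar> \<le> \<bar>c\<bar> * exp (\<bar>c\<bar> * (\<bar>a\<bar> + \<bar>b\<bar>))"
      by (simp add: abs_mult mult_left_mono)
    then show ?thesis unfolding z(3) using lt by (simp add: abs_mult mult.commute mult_left_mono)
  qed simp
qed simp


lemma null_sets_lborel_open_cover:
  fixes N :: "real set"
  assumes "N \<in> null_sets lborel" "\<delta> > 0"
  obtains U where "open U" "N \<subseteq> U" "U \<in> lmeasurable" "measure lebesgue U < \<delta>"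
proof -
  have N: "N \<in> null_sets lebesgue"
    using null_sets_completionI[OF assms(1)] by simp
  then obtain T where T: "open T" "N \<subseteq> T" "T - N \<in> lmeasurable" "emeasure lebesgue (T - N) < ennreal \<delta>"
    using sets_lebesgue_outer_open[OF _ assms(2)] by blast
  have Nf: "N \<in> lmeasurable" using N by (simp add: null_sets_def fmeasurableI)
  have TU: "T = (T - N) \<union> N" using T(2) by blast
  have Tm: "T \<in> lmeasurable" using TU T(3) Nf fmeasurable.Un by metis
  have "measure lebesgue T \<le> measure lebesgue (T - N) + measure lebesgue N"
    by (subst TU, rule measure_Un_le) (use T(3) Nf in \<open>auto simp: fmeasurable_def\<close>)
  also have "measure lebesgue N = 0" using N by (simp add: measure_eq_0_null_sets)
  also have "measure lebesgue (T - N) < \<delta>"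
    using T(4) emeasure_eq_measure2[OF T(3)] ennreal_less_iff[of "measure lebesgue (T - N)" \<delta>]
      by simp
  finally show ?thesis using that T Tm by auto
qed

lemma tagged_division_of_realE:
  assumes "p tagged_division_of {a..b::real}" "(x, K) \<in> p"
  obtains u v where "K = {u..v}" "u \<le> x" "x \<le> v" "a \<le> u" "v \<le> b" "Inf K = u" "Sup K = v"
proof -
  obtain u v where K: "K = cbox u v" using tagged_division_ofD(4)[OF assms] by blast
  then have K': "K = {u..v}" by simp
  have "x \<in> K" using tagged_division_ofD(2)[OF assms] .
  then have uv: "u \<le> x" "x \<le> v" using K' by auto
  have "K \<subseteq> {a..b}" using tagged_division_ofD(3)[OF assms] .
  then have "a \<le> u" "v \<le> b" using K' uv by auto
  then show ?thesis using that K' uv by auto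
qed

lemma disjoint_open_intervals_le:
  fixes u1 v1 u2 v2 :: real
  assumes "u1 < v1" "u2 < v2" "{u1<..<v1} \<inter> {u2<..<v2} = {}"
  shows "v1 \<le> u2 \<or> v2 \<le> u1"
proof (rule ccontr)
  assume "\<not> (v1 \<le> u2 \<or> v2 \<le> u1)"
  then have "(max u1 u2 + min v1 v2) / 2 \<in> {u1<..<v1} \<inter> {u2<..<v2}"
    using assms(1,2) by (auto simp: max_def min_def)
  then show False using assms(3) by blast
qed

lemma tagged_division_of_subset_Union:
  assumes "p tagged_division_of S" "q \<subseteq> p"
  shows "q tagged_division_of \<Union>(snd ` q)"
proof -
  have "p tagged_partial_division_of S" using assms(1) by (simp add: tagged_division_of_def)
  then have "q tagged_partial_division_of S" using assms(2) by (rule tagged_partial_division_subset)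
  then show ?thesis by (rule tagged_partial_division_of_Union_self)
qed

lemma sum_tagged_subdivision_lengths:
  assumes p: "p tagged_division_of {a..b::real}" and q: "q \<subseteq> p"
  shows "(\<Sum>(x, K)\<in>q. Sup K - Inf K) = measure lebesgue (\<Union>(snd ` q))"
proof -
  have q_div: "q tagged_division_of \<Union>(snd ` q)"
    using tagged_division_of_subset_Union[OF p q] .
  have "(\<Sum>(x, K)\<in>q. Sup K - Inf K) = (\<Sum>(x, K)\<in>q. measure lebesgue K)"
  proof (intro sum.cong refl, clarify)
    fix x K assume "(x, K) \<in> q"
    then obtain u v where "K = {u..v}" "u \<le> x" "x \<le> v" "Inf K = u" "Sup K = v"
      using tagged_division_of_realE[OF p, of x K] q by blast
    then show "Sup K - Inf K = measure lebesgue K" by simp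
  qed
  also have "\<dots> = sum (measure lebesgue) (snd ` q)"
  proof (rule sum.over_tagged_division_lemma[OF q_div])
    fix u v :: real assume "box u v = {}"
    then have "cbox u v \<subseteq> {u}" by auto
    then show "measure lebesgue (cbox u v) = 0"
      using negligible_subset[OF negligible_sing] negligible_imp_measure0 by blast
  qed
  also have "\<dots> = measure lebesgue (\<Union>(snd ` q))"
    by (rule content_division[OF division_of_tagged_division[OF q_div]])
  finally show ?thesis .
qed

lemma DERIV_neg_imp_locally_decreasing:
  fixes g :: "real \<Rightarrow> real"
  assumes "(g has_real_derivative D) (at t)" "D < 0"
  shows "\<exists>r>0. \<forall>h. 0 < h \<longrightarrow> h < r \<longrightarrow> g (t + h) < g t \<and> g t < g (t - h)"
proof -
  obtain r1 where r1: "r1 > 0" "\<forall>h>0. h < r1 \<longrightarrow> g (t + h) < g t"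
    using DERIV_neg_dec_right[OF assms] by blast
  obtain r2 where r2: "r2 > 0" "\<forall>h>0. h < r2 \<longrightarrow> g t < g (t - h)"
    using DERIV_neg_dec_left[OF assms] by blast
  show ?thesis
    using r1 r2 by (intro exI[of _ "min r1 r2"]) simp
qed

lemma abs_cont_on_interval_tagged_subsetD:
  fixes f :: "real \<Rightarrow> real"
  assumes ac: "abs_cont_on_interval f a b" and \<eta>: "\<eta> > 0"
  obtains \<delta> where "\<delta> > 0" "\<And>p q. p tagged_division_of {a..b} \<Longrightarrow> q \<subseteq> p \<Longrightarrow>
      (\<forall>(x, K)\<in>q. Inf K < Sup K) \<Longrightarrow> measure lebesgue (\<Union>(snd ` q)) < \<delta> \<Longrightarrow>
      (\<Sum>(x, K)\<in>q. \<bar>f (Sup K) - f (Inf K)\<bar>) < \<eta>"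
proof -
  obtain \<delta> where \<delta>: "\<delta> > 0" and small: "\<And>(S :: (real \<times> real set) set) l r. finite S \<Longrightarrow>
      (\<forall>k\<in>S. a \<le> l k \<and> l k \<le> r k \<and> r k \<le> b) \<Longrightarrow>
      (\<forall>k\<in>S. \<forall>m\<in>S. k \<noteq> m \<longrightarrow> r k \<le> l m \<or> r m \<le> l k) \<Longrightarrow> (\<Sum>k\<in>S. r k - l k) < \<delta> \<Longrightarrow>
      (\<Sum>k\<in>S. \<bar>f (r k) - f (l k)\<bar>) < \<eta>"
    by (rule abs_cont_on_interval_finite_familyD[OF ac \<eta>], rule that) assumption+
  have "(\<Sum>(x, K)\<in>q. \<bar>f (Sup K) - f (Inf K)\<bar>) < \<eta>"
    if p: "p tagged_division_of {a..b}" and qp: "q \<subseteq> p" and nondegenerate: "\<forall>(x, K)\<in>q. Inf K < Sup K"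
      and small_union: "measure lebesgue (\<Union>(snd ` q)) < \<delta>" for p q
  proof -
    have intervals: "a \<le> Inf K \<and> Inf K < Sup K \<and> Sup K \<le> b \<and> interior K = {Inf K<..<Sup K}"
      if "(x, K) \<in> q" for x K
    proof -
      have "(x, K) \<in> p" using that qp by auto
      then obtain u v where "K = {u..v}" "a \<le> u" "v \<le> b" "Inf K = u" "Sup K = v"
        by (rule tagged_division_of_realE[OF p])
      then show ?thesis using nondegenerate that by auto
    qed
    have "(\<Sum>z\<in>q. \<bar>f (Sup (snd z)) - f (Inf (snd z))\<bar>) < \<eta>"
    proof (rule small)
      show "finite q" using tagged_division_of_finite[OF p] qp finite_subset by blast
      show "\<forall>z\<in>q. a \<le> Inf (snd z) \<and> Inf (snd z) \<le> Sup (snd z) \<and> Sup (snd z) \<le> b"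
        using intervals by fastforce
      show "\<forall>z\<in>q. \<forall>w\<in>q. z \<noteq> w \<longrightarrow> Sup (snd z) \<le> Inf (snd w) \<or> Sup (snd w) \<le> Inf (snd z)"
      proof (intro ballI impI)
        fix z w assume zw: "z \<in> q" "w \<in> q" "z \<noteq> w"
        have iz: "Inf (snd z) < Sup (snd z)" "interior (snd z) = {Inf (snd z)<..<Sup (snd z)}"
          using intervals[of "fst z" "snd z"] zw(1) by simp_all
        have iw: "Inf (snd w) < Sup (snd w)" "interior (snd w) = {Inf (snd w)<..<Sup (snd w)}"
          using intervals[of "fst w" "snd w"] zw(2) by simp_all
        have "interior (snd z) \<inter> interior (snd w) = {}"
          using tagged_division_ofD(5)[OF p, of "fst z" "snd z" "fst w" "snd w"] zw qp by auto
        then show "Sup (snd z) \<le> Inf (snd w) \<or> Sup (snd w) \<le> Inf (snd z)"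
          using disjoint_open_intervals_le[OF iz(1) iw(1)] iz(2) iw(2) by simp
      qed
      show "(\<Sum>z\<in>q. Sup (snd z) - Inf (snd z)) < \<delta>"
        using sum_tagged_subdivision_lengths[OF p qp] small_union by (simp add: case_prod_beta)
    qed
    then show ?thesis by (simp add: case_prod_beta)
  qed
  then show ?thesis using that \<delta> by blast
qed

lemma gauge_local_decrease:
  fixes g :: "real \<Rightarrow> real"
  assumes U: "open U" "N \<subseteq> U"
    and der: "\<And>t. t \<in> S - N \<Longrightarrow> \<exists>D<0. (g has_real_derivative D) (at t)"
  obtains r where "\<And>t. r t > 0" "\<And>t. t \<in> N \<Longrightarrow> ball t (r t) \<subseteq> U"
    "\<And>t h. t \<in> S - N \<Longrightarrow> 0 < h \<Longrightarrow> h < r t \<Longrightarrow> g (t + h) < g t \<and> g t < g (t - h)"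
proof -
  have "\<exists>r>0. (t \<in> N \<longrightarrow> ball t r \<subseteq> U) \<and>
      (t \<in> S - N \<longrightarrow> (\<forall>h. 0 < h \<longrightarrow> h < r \<longrightarrow> g (t + h) < g t \<and> g t < g (t - h)))" for t
  proof (cases "t \<in> N")
    case True
    then show ?thesis using U open_contains_ball by blast
  next
    case False
    show ?thesis
    proof (cases "t \<in> S")
      case True
      then show ?thesis using False der DERIV_neg_imp_locally_decreasing by blast
    qed (use False in \<open>auto intro: exI[of _ 1]\<close>)
  qed
  then show ?thesis using that by metis
qed

text \<open>Cousin's lemma applied to a gauge that is small around the exceptional null set and
  detects strict decrease of \<open>f t - \<epsilon> t\<close> elsewhere: the tags in the null set carry intervals of
  total length below the modulus of absolute continuity, the others contribute negatively.\<close>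

lemma abs_cont_on_interval_increment_le:
  fixes f :: "real \<Rightarrow> real"
  assumes ac: "abs_cont_on_interval f a b" and ab: "a \<le> b"
    and N: "N \<in> null_sets lborel"
    and der: "\<And>t. t \<in> {a<..<b} \<Longrightarrow> t \<notin> N \<Longrightarrow> \<exists>D. (f has_real_derivative D) (at t) \<and> D \<le> 0"
    and \<eta>: "\<eta> > 0" and \<epsilon>: "\<epsilon> > 0"
  shows "f b - f a \<le> \<eta> + \<epsilon> * (b - a)"
proof -
  obtain \<delta> where \<delta>: "\<delta> > 0" and small: "\<And>p q. p tagged_division_of {a..b} \<Longrightarrow> q \<subseteq> p \<Longrightarrow>
      (\<forall>(x, K)\<in>q. Inf K < Sup K) \<Longrightarrow> measure lebesgue (\<Union>(snd ` q)) < \<delta> \<Longrightarrow>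
      (\<Sum>(x, K)\<in>q. \<bar>f (Sup K) - f (Inf K)\<bar>) < \<eta>"
    by (rule abs_cont_on_interval_tagged_subsetD[OF ac \<eta>], rule that) assumption+
  define N' where "N' = N \<union> {a, b}"
  have "N' \<in> null_sets lborel"
    unfolding N'_def by (rule null_sets.Un[OF N finite_imp_null_set_lborel]) simp
  then obtain U where U: "open U" "N' \<subseteq> U" "U \<in> lmeasurable" "measure lebesgue U < \<delta>"
    using null_sets_lborel_open_cover \<delta> by blast
  define g where "g t = f t - \<epsilon> * t" for t
  have "\<exists>D<0. (g has_real_derivative D) (at t)" if "t \<in> {a..b} - N'" for t
  proof -
    have "t \<in> {a<..<b}" "t \<notin> N" using that unfolding N'_def by auto
    then obtain D where D: "(f has_real_derivative D) (at t)" "D \<le> 0" using der by blast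
    have "(g has_real_derivative (D - \<epsilon>)) (at t)"
      unfolding g_def by (auto intro!: derivative_eq_intros D)
    then show ?thesis using D(2) \<epsilon> by (intro exI[of _ "D - \<epsilon>"]) simp
  qed
  then obtain r where r: "\<And>t. r t > 0" "\<And>t. t \<in> N' \<Longrightarrow> ball t (r t) \<subseteq> U"
      "\<And>t h. t \<in> {a..b} - N' \<Longrightarrow> 0 < h \<Longrightarrow> h < r t \<Longrightarrow> g (t + h) < g t \<and> g t < g (t - h)"
    using gauge_local_decrease[OF U(1,2)] by metis
  have "gauge (\<lambda>t. ball t (r t))" using r(1) by (simp add: gauge_ball_dependent)
  then obtain p where p: "p tagged_division_of {a..b}" "(\<lambda>t. ball t (r t)) fine p"
    using fine_division_exists_real by blast
  have finp: "finite p" using p(1) by blast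
  define q where "q = {(x, K) \<in> p. x \<in> N' \<and> Inf K < Sup K}"
  have qp: "q \<subseteq> p" unfolding q_def by auto
  have decreasing: "g (Sup K) - g (Inf K) \<le> 0" if xK: "(x, K) \<in> p - q" for x K
  proof -
    obtain u v where uv: "K = {u..v}" "u \<le> x" "x \<le> v" "a \<le> u" "v \<le> b" "Inf K = u" "Sup K = v"
      using tagged_division_of_realE[OF p(1), of x K] xK by blast
    show ?thesis
    proof (cases "u < v")
      case True
      then have x: "x \<in> {a..b} - N'" using xK uv unfolding q_def by auto
      have "K \<subseteq> ball x (r x)" using p(2) xK by (auto simp: fine_def)
      then have "\<forall>t. u \<le> t \<and> t \<le> v \<longrightarrow> \<bar>x - t\<bar> < r x"
        using uv by (auto simp: subset_iff dist_real_def)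
      then have "v - x < r x" "x - u < r x"
        using uv by force+
      have "g v \<le> g x"
      proof (cases "v = x")
        case False
        then show ?thesis using r(3)[OF x, of "v - x"] \<open>v - x < r x\<close> uv by auto
      qed simp
      moreover have "g x \<le> g u"
      proof (cases "u = x")
        case False
        then show ?thesis using r(3)[OF x, of "x - u"] \<open>x - u < r x\<close> uv by auto
      qed simp
      ultimately show ?thesis using uv by simp
    next
      case False
      then have "u = v" using uv by simp
      then show ?thesis using uv by simp
    qed
  qed
  have "g b - g a = (\<Sum>(x, K)\<in>p. g (Sup K) - g (Inf K))"
    using additive_tagged_division_1[OF ab p(1), of g] by simp
  also have "\<dots> = (\<Sum>(x, K)\<in>q. g (Sup K) - g (Inf K)) + (\<Sum>(x, K)\<in>p - q. g (Sup K) - g (Inf K))"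
    using sum.subset_diff[OF qp finp, of "\<lambda>(x, K). g (Sup K) - g (Inf K)"] by linarith
  also have "\<dots> \<le> (\<Sum>(x, K)\<in>q. g (Sup K) - g (Inf K))"
  proof -
    have "(\<Sum>(x, K)\<in>p - q. g (Sup K) - g (Inf K)) \<le> 0"
      using decreasing by (intro sum_nonpos) auto
    then show ?thesis by linarith
  qed
  also have "\<dots> \<le> (\<Sum>(x, K)\<in>q. \<bar>f (Sup K) - f (Inf K)\<bar>)"
  proof (rule sum_mono, clarify)
    fix x K assume "(x, K) \<in> q"
    then have "\<epsilon> * Inf K < \<epsilon> * Sup K" unfolding q_def using \<epsilon> by auto
    then show "g (Sup K) - g (Inf K) \<le> \<bar>f (Sup K) - f (Inf K)\<bar>"
      unfolding g_def using abs_ge_self[of "f (Sup K) - f (Inf K)"] by linarith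
  qed
  also have "\<dots> < \<eta>"
  proof (rule small[OF p(1) qp])
    show "\<forall>(x, K)\<in>q. Inf K < Sup K" unfolding q_def by auto
    have "\<Union>(snd ` q) \<subseteq> U"
    proof
      fix y assume "y \<in> \<Union>(snd ` q)"
      then obtain x K where xK: "(x, K) \<in> q" "y \<in> K" by auto
      then have "x \<in> N'" "(x, K) \<in> p" unfolding q_def by auto
      moreover have "K \<subseteq> ball x (r x)" using p(2) \<open>(x, K) \<in> p\<close>
        by (auto simp: fine_def)
      ultimately show "y \<in> U" using r(2) xK by blast
    qed
    moreover have "\<Union>(snd ` q) \<in> sets lebesgue"
      by (rule fmeasurableD[OF lmeasurable_division[OF division_of_tagged_division[OF
            tagged_division_of_subset_Union[OF p(1) qp]]]])
    ultimately have "measure lebesgue (\<Union>(snd ` q)) \<le> measure lebesgue U"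
      by (rule measure_mono_fmeasurable[OF _ _ U(3)])
    then show "measure lebesgue (\<Union>(snd ` q)) < \<delta>" using U(4) by linarith
  qed
  finally show ?thesis unfolding g_def by (simp add: algebra_simps)
qed

lemma abs_cont_AE_DERIV_nonpos_imp_le:
  assumes ac: "abs_cont_on_interval F s T" and sT: "s \<le> T"
    and ae: "AE t in lborel. t \<in> {s<..<T} \<longrightarrow> (\<exists>D. (F has_real_derivative D) (at t) \<and> D \<le> 0)"
  shows "F T \<le> F s"
proof -
  obtain N where N: "N \<in> null_sets lborel"
    and der: "\<And>t. t \<in> {s<..<T} \<Longrightarrow> t \<notin> N \<Longrightarrow> \<exists>D. (F has_real_derivative D) (at t) \<and> D \<le> 0"
  proof -
    obtain N where N: "{t \<in> space lborel. \<not> (t \<in> {s<..<T} \<longrightarrow> (\<exists>D. (F has_real_derivative D) (at t) \<and> D \<le> 0))} \<subseteq> N"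
      "emeasure lborel N = 0" "N \<in> sets lborel"
      using AE_E[OF ae] by blast
    show ?thesis by (rule that[of N]) (use N in auto)
  qed
  show ?thesis
  proof (rule ccontr)
    assume "\<not> F T \<le> F s"
    then have pos: "F T - F s > 0" by simp
    define e where "e = (F T - F s) / 4"
    have "e > 0" "e / (T - s + 1) > 0" using pos sT unfolding e_def by auto
    from abs_cont_on_interval_increment_le[OF ac sT N der this]
    have "F T - F s \<le> e + e / (T - s + 1) * (T - s)" .
    also have "e / (T - s + 1) * (T - s) \<le> e"
      using pos sT unfolding e_def by (auto simp: field_simps)
    finally show False unfolding e_def using pos by simp
  qed
qed


section \<open>Differential inequalities\<close>

lemma abs_cont_AE_DERIV_le_const:
  assumes ac: "abs_cont_on_interval F s T" and sT: "s \<le> T"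
    and ae: "AE t in lborel. t \<in> {s<..<T} \<longrightarrow> (\<exists>D. (F has_real_derivative D) (at t) \<and> D \<le> - c)"
  shows "F T \<le> F s - c * (T - s)"
proof -
  have "abs_cont_on_interval (\<lambda>t. c * t) s T"
    by (rule abs_cont_on_interval_lipschitz[of "\<bar>c\<bar>"]) (auto simp: abs_mult simp flip: right_diff_distrib)
  then have "abs_cont_on_interval (\<lambda>t. F t + c * t) s T"
    by (rule abs_cont_on_interval_add[OF ac])
  moreover have "AE t in lborel. t \<in> {s<..<T} \<longrightarrow>
      (\<exists>D. ((\<lambda>t. F t + c * t) has_real_derivative D) (at t) \<and> D \<le> 0)"
    using ae
  proof (rule AE_mp, intro AE_I2 impI)
    fix t assume "t \<in> {s<..<T} \<longrightarrow> (\<exists>D. (F has_real_derivative D) (at t) \<and> D \<le> - c)" "t \<in> {s<..<T}"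
    then obtain D where D: "(F has_real_derivative D) (at t)" "D \<le> - c" by blast
    have "((\<lambda>t. F t + c * t) has_real_derivative D + c) (at t)"
      by (auto intro!: derivative_eq_intros D(1))
    then show "\<exists>D. ((\<lambda>t. F t + c * t) has_real_derivative D) (at t) \<and> D \<le> 0"
      using D(2) by (intro exI[of _ "D + c"]) auto
  qed
  ultimately have "F T + c * T \<le> F s + c * s"
    by (rule abs_cont_AE_DERIV_nonpos_imp_le[OF _ sT])
  then show ?thesis by (simp add: algebra_simps)
qed

text \<open>Gronwall's inequality: if \<open>F' \<le> -a F + K exp (-\<beta> (t - s))\<close>, then
  \<open>exp (a (t - s)) F t - K / (a - \<beta>) exp ((a - \<beta>) (t - s))\<close> is nonincreasing.\<close>

lemma abs_cont_gronwall_exp: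
  assumes ac: "abs_cont_on_interval F s T" and sT: "s \<le> T"
    and \<beta>: "0 < \<beta>" "\<beta> < a" and K: "K \<ge> 0"
    and ae: "AE t in lborel. t \<in> {s<..<T} \<longrightarrow>
      (\<exists>D. (F has_real_derivative D) (at t) \<and> D \<le> - a * F t + K * exp (- \<beta> * (t - s)))"
  shows "F T \<le> (max (F s) 0 + K / (a - \<beta>)) * exp (- \<beta> * (T - s))"
proof -
  define H where "H t = exp (a * (t - s)) * F t - K / (a - \<beta>) * exp ((a - \<beta>) * (t - s))" for t
  have exp_shift: "abs_cont_on_interval (\<lambda>t. exp (c * (t - s))) s T" for c
  proof -
    have "(\<lambda>t. exp (c * (t - s))) = (\<lambda>t. exp (- c * s) * exp (c * t))"
      by (rule ext) (simp add: exp_add[symmetric] algebra_simps)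
    then show ?thesis
      using abs_cont_on_interval_cmult[OF abs_cont_on_interval_exp, of "exp (- c * s)" c s T]
        by simp
  qed
  have "abs_cont_on_interval H s T"
    unfolding H_def
    by (intro abs_cont_on_interval_diff abs_cont_on_interval_mult abs_cont_on_interval_cmult exp_shift ac)
  moreover have "AE t in lborel. t \<in> {s<..<T} \<longrightarrow> (\<exists>D. (H has_real_derivative D) (at t) \<and> D \<le> 0)"
    using ae
  proof (rule AE_mp, intro AE_I2 impI)
    fix t assume "t \<in> {s<..<T} \<longrightarrow>
        (\<exists>D. (F has_real_derivative D) (at t) \<and> D \<le> - a * F t + K * exp (- \<beta> * (t - s)))"
      and "t \<in> {s<..<T}"
    then obtain D where D: "(F has_real_derivative D) (at t)" "D \<le> - a * F t + K * exp (- \<beta> * (t - s))"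
      by blast
    define E where "E = a * exp (a * (t - s)) * F t + D * exp (a * (t - s))
        - K / (a - \<beta>) * ((a - \<beta>) * exp ((a - \<beta>) * (t - s)))"
    have "(H has_real_derivative E) (at t)"
      unfolding H_def E_def by (auto intro!: derivative_eq_intros D(1))
    moreover have "E \<le> 0"
    proof -
      have "exp (a * (t - s)) * (a * F t + D) \<le> exp (a * (t - s)) * (K * exp (- \<beta> * (t - s)))"
        using D(2) by (intro mult_left_mono) auto
      also have "\<dots> = K * exp ((a - \<beta>) * (t - s))"
        by (simp add: mult_exp_exp algebra_simps)
      finally have "exp (a * (t - s)) * (a * F t + D) \<le> K * exp ((a - \<beta>) * (t - s))" .
      moreover have "K / (a - \<beta>) * ((a - \<beta>) * exp ((a - \<beta>) * (t - s))) = K * exp ((a - \<beta>) * (t - s))"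
        using \<beta> by simp
      then have "E = exp (a * (t - s)) * (a * F t + D) - K * exp ((a - \<beta>) * (t - s))"
        unfolding E_def by (simp add: algebra_simps)
      ultimately show ?thesis by simp
    qed
    ultimately show "\<exists>D. (H has_real_derivative D) (at t) \<and> D \<le> 0" by blast
  qed
  ultimately have "H T \<le> H s" by (rule abs_cont_AE_DERIV_nonpos_imp_le[OF _ sT])
  then have "exp (a * (T - s)) * F T \<le> F s - K / (a - \<beta>) + K / (a - \<beta>) * exp ((a - \<beta>) * (T - s))"
    unfolding H_def by simp
  then have "exp (- a * (T - s)) * (exp (a * (T - s)) * F T)
      \<le> exp (- a * (T - s)) * (F s - K / (a - \<beta>) + K / (a - \<beta>) * exp ((a - \<beta>) * (T - s)))"
    by (intro mult_left_mono) auto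
  moreover have "exp (- a * (T - s)) * (exp (a * (T - s)) * F T) = F T"
  proof -
    have "exp (- a * (T - s)) * exp (a * (T - s)) = 1"
      by (metis exp_minus_inverse mult.commute mult_minus_left)
    then show ?thesis by (simp only: mult.assoc[symmetric] mult_1_left)
  qed
  ultimately have "F T \<le> exp (- a * (T - s)) * (F s - K / (a - \<beta>) + K / (a - \<beta>) * exp ((a - \<beta>) * (T - s)))"
    by linarith
  also have "\<dots> = exp (- a * (T - s)) * F s - K / (a - \<beta>) * exp (- a * (T - s))
      + K / (a - \<beta>) * exp (- \<beta> * (T - s))"
    by (simp add: algebra_simps mult_exp_exp)
  also have "\<dots> \<le> max (F s) 0 * exp (- \<beta> * (T - s)) + K / (a - \<beta>) * exp (- \<beta> * (T - s))"
  proof -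
    have "exp (- a * (T - s)) \<le> exp (- \<beta> * (T - s))" using \<beta> sT
      by (simp add: mult_right_mono)
    then have "exp (- a * (T - s)) * F s \<le> max (F s) 0 * exp (- \<beta> * (T - s))"
      by (smt (verit, best) exp_gt_zero mult_left_mono mult_nonneg_nonneg mult_nonpos_nonneg mult.commute)
    moreover have "K / (a - \<beta>) * exp (- a * (T - s)) \<ge> 0" using K \<beta> by simp
    ultimately show ?thesis by linarith
  qed
  finally show ?thesis by (simp add: algebra_simps)
qed

lemma abs_cont_barrier:
  assumes ac: "\<And>T. s \<le> T \<Longrightarrow> abs_cont_on_interval F s T" and Fs: "F s \<ge> c"
    and ae: "AE t in lborel. s < t \<and> F t < c \<longrightarrow> (\<exists>D. (F has_real_derivative D) (at t) \<and> D \<ge> 0)"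
    and t1: "t1 \<ge> s"
  shows "F t1 \<ge> c"
proof (rule ccontr)
  assume "\<not> F t1 \<ge> c"
  then have Ft1: "F t1 < c" by simp
  have cont: "continuous_on {s..t1} F"
    using abs_cont_on_interval_imp_continuous_on[OF ac[OF t1]] .
  define S where "S = {s..t1} \<inter> F -` {c..}"
  have "closed S" unfolding S_def by (rule continuous_closed_preimage[OF cont]) auto
  moreover have "s \<in> S" "bdd_above S" unfolding S_def using Fs t1 by auto
  ultimately have "Sup S \<in> S" using closed_contains_Sup by blast
  then have t0: "s \<le> Sup S" "Sup S \<le> t1" "F (Sup S) \<ge> c" unfolding S_def by auto
  have above: "F \<tau> < c" if "\<tau> \<in> {Sup S<..t1}" for \<tau>
    using that cSup_upper[OF _ \<open>bdd_above S\<close>, of \<tau>] t0 unfolding S_def by force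
  have "abs_cont_on_interval (\<lambda>t. - F t) (Sup S) t1"
    using abs_cont_on_interval_minus[OF abs_cont_on_interval_subinterval[OF ac[OF t1] t0(1) order_refl]] .
  moreover have "AE t in lborel. t \<in> {Sup S<..<t1} \<longrightarrow>
      (\<exists>D. ((\<lambda>t. - F t) has_real_derivative D) (at t) \<and> D \<le> 0)"
    using ae
  proof (rule AE_mp, intro AE_I2 impI)
    fix t assume h: "s < t \<and> F t < c \<longrightarrow> (\<exists>D. (F has_real_derivative D) (at t) \<and> D \<ge> 0)"
      and t: "t \<in> {Sup S<..<t1}"
    then obtain D where "(F has_real_derivative D) (at t)" "D \<ge> 0" using t0 above[of t] by auto
    then show "\<exists>D. ((\<lambda>t. - F t) has_real_derivative D) (at t) \<and> D \<le> 0"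
      by (intro exI[of _ "- D"]) (auto intro: DERIV_minus)
  qed
  ultimately have "- F t1 \<le> - F (Sup S)" by (rule abs_cont_AE_DERIV_nonpos_imp_le[OF _ t0(2)])
  then show False using t0 Ft1 by simp
qed

lemma continuous_bootstrap:
  fixes F :: "real \<Rightarrow> real"
  assumes cont: "\<And>T. s \<le> T \<Longrightarrow> continuous_on {s..T} F" and Fs: "F s < c" and c': "c' < c"
    and step: "\<And>T. s \<le> T \<Longrightarrow> \<forall>t\<in>{s..T}. F t \<le> c \<Longrightarrow> F T \<le> c'"
    and t2: "t2 \<ge> s"
  shows "F t2 \<le> c'"
proof (cases "\<forall>t\<in>{s..t2}. F t \<le> c")
  case True
  then show ?thesis using step t2 by blast
next
  case False
  then obtain t3 where t3: "t3 \<in> {s..t2}" "F t3 > c" by (auto simp: not_le)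
  define S where "S = {s..t2} \<inter> F -` {c..}"
  have "closed S" unfolding S_def by (rule continuous_closed_preimage[OF cont[OF t2]]) auto
  moreover have "t3 \<in> S" "bdd_below S" unfolding S_def using t3 by auto
  ultimately have "Inf S \<in> S" using closed_contains_Inf by blast
  then have t0: "s \<le> Inf S" "Inf S \<le> t2" "F (Inf S) \<ge> c" unfolding S_def by auto
  have below: "F \<tau> < c" if "\<tau> \<in> {s..<Inf S}" for \<tau>
    using that cInf_lower[OF _ \<open>bdd_below S\<close>, of \<tau>] t0 unfolding S_def by force
  have "F (Inf S) \<le> c"
  proof (rule ccontr)
    assume "\<not> F (Inf S) \<le> c"
    moreover have "continuous_on {s..Inf S} F" using cont[OF t0(1)] .
    ultimately obtain \<tau> where "s \<le> \<tau>" "\<tau> \<le> Inf S" "F \<tau> = c"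
      using IVT'[of F s c "Inf S"] Fs t0(1) by auto
    then show False using below[of \<tau>] \<open>\<not> F (Inf S) \<le> c\<close>
      by (cases "\<tau> = Inf S") auto
  qed
  then have "\<forall>t\<in>{s..Inf S}. F t \<le> c" using below by (auto simp: le_less)
  then have "F (Inf S) \<le> c'" using step t0 by blast
  then show ?thesis using c' t0 by simp
qed


section \<open>Exponential decay\<close>

definition exp_decaying :: "(real \<Rightarrow> real) \<Rightarrow> real \<Rightarrow> bool" where
  "exp_decaying f s \<longleftrightarrow> (\<exists>C \<beta>. \<beta> > 0 \<and> (\<forall>t\<ge>s. \<bar>f t\<bar> \<le> C * exp (- \<beta> * (t - s))))"

lemma exp_decayingE:
  assumes "exp_decaying f s"
  obtains C \<beta> where "\<beta> > 0" "C \<ge> 0" "\<And>t. t \<ge> s \<Longrightarrow> \<bar>f t\<bar> \<le> C * exp (- \<beta> * (t - s))"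
proof -
  obtain C \<beta> where h: "\<beta> > 0" "\<forall>t\<ge>s. \<bar>f t\<bar> \<le> C * exp (- \<beta> * (t - s))"
    using assms unfolding exp_decaying_def by blast
  moreover have "C \<ge> 0" using h(2) abs_ge_zero[of "f s"] by force
  ultimately show ?thesis using that by blast
qed

lemma exp_decaying_zero: "exp_decaying (\<lambda>t. 0) s"
  unfolding exp_decaying_def by (rule exI[of _ 0], rule exI[of _ 1]) auto

lemma exp_decaying_abs: "exp_decaying f s \<Longrightarrow> exp_decaying (\<lambda>t. \<bar>f t\<bar>) s"
  unfolding exp_decaying_def by simp

lemma exp_decaying_cong: "(\<And>t. t \<ge> s \<Longrightarrow> f t = g t) \<Longrightarrow> exp_decaying g s \<Longrightarrow> exp_decaying f s"
  unfolding exp_decaying_def by auto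

lemma exp_decaying_add:
  assumes "exp_decaying f s" "exp_decaying g s"
  shows "exp_decaying (\<lambda>t. f t + g t) s"
proof -
  obtain C1 \<beta>1 where 1: "\<beta>1 > 0" "C1 \<ge> 0" "\<And>t. t \<ge> s \<Longrightarrow> \<bar>f t\<bar> \<le> C1 * exp (- \<beta>1 * (t - s))"
    using exp_decayingE[OF assms(1)] by blast
  obtain C2 \<beta>2 where 2: "\<beta>2 > 0" "C2 \<ge> 0" "\<And>t. t \<ge> s \<Longrightarrow> \<bar>g t\<bar> \<le> C2 * exp (- \<beta>2 * (t - s))"
    using exp_decayingE[OF assms(2)] by blast
  have "\<bar>f t + g t\<bar> \<le> (C1 + C2) * exp (- min \<beta>1 \<beta>2 * (t - s))" if t: "t \<ge> s" for t
  proof -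
    have "exp (- \<beta>1 * (t - s)) \<le> exp (- min \<beta>1 \<beta>2 * (t - s))"
      "exp (- \<beta>2 * (t - s)) \<le> exp (- min \<beta>1 \<beta>2 * (t - s))"
      using t by (simp_all add: mult_right_mono)
    then have "C1 * exp (- \<beta>1 * (t - s)) + C2 * exp (- \<beta>2 * (t - s))
        \<le> C1 * exp (- min \<beta>1 \<beta>2 * (t - s)) + C2 * exp (- min \<beta>1 \<beta>2 * (t - s))"
      using 1(2) 2(2) by (intro add_mono mult_left_mono) auto
    moreover have "\<bar>f t + g t\<bar> \<le> C1 * exp (- \<beta>1 * (t - s)) + C2 * exp (- \<beta>2 * (t - s))"
      using 1(3)[OF t] 2(3)[OF t] by linarith
    ultimately show ?thesis by (simp add: algebra_simps)
  qed
  then show ?thesis unfolding exp_decaying_def using 1(1) 2(1)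
    by (intro exI[of _ "C1 + C2"] exI[of _ "min \<beta>1 \<beta>2"]) simp
qed

lemma exp_decaying_cmult:
  assumes "exp_decaying f s"
  shows "exp_decaying (\<lambda>t. c * f t) s"
proof -
  obtain C \<beta> where "\<beta> > 0" "C \<ge> 0" "\<And>t. t \<ge> s \<Longrightarrow> \<bar>f t\<bar> \<le> C * exp (- \<beta> * (t - s))"
    using exp_decayingE[OF assms] by blast
  then show ?thesis unfolding exp_decaying_def
    by (intro exI[of _ "\<bar>c\<bar> * C"] exI[of _ \<beta>]) (simp add: abs_mult mult.assoc mult_left_mono)
qed

lemma exp_decaying_sum:
  assumes "finite A" "\<And>p. p \<in> A \<Longrightarrow> exp_decaying (f p) s"
  shows "exp_decaying (\<lambda>t. \<Sum>p\<in>A. f p t) s"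
  using assms
proof (induction A rule: finite_induct)
  case empty
  then show ?case using exp_decaying_zero by simp
next
  case (insert a F)
  then show ?case using exp_decaying_add[of "f a" s "\<lambda>t. \<Sum>p\<in>F. f p t"] by simp
qed

lemma exp_decaying_linear_ODE:
  assumes ac: "\<And>T. s \<le> T \<Longrightarrow> abs_cont_on_interval F s T" and a: "a > 0"
    and g: "exp_decaying g s"
    and ae: "AE t in lborel. s < t \<longrightarrow> (F has_real_derivative (- a * F t + g t)) (at t)"
  shows "exp_decaying F s"
proof -
  obtain C \<beta>0 where g_bound: "\<beta>0 > 0" "C \<ge> 0" "\<And>t. t \<ge> s \<Longrightarrow> \<bar>g t\<bar> \<le> C * exp (- \<beta>0 * (t - s))"
    using exp_decayingE[OF g] by blast
  define \<beta> where "\<beta> = min \<beta>0 (a / 2)"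
  have \<beta>: "0 < \<beta>" "\<beta> < a" "\<beta> \<le> \<beta>0" unfolding \<beta>_def
    using g_bound a by auto
  have g_le: "\<bar>g t\<bar> \<le> C * exp (- \<beta> * (t - s))" if "t \<ge> s" for t
  proof -
    have "exp (- \<beta>0 * (t - s)) \<le> exp (- \<beta> * (t - s))" using that \<beta>
      by (simp add: mult_right_mono)
    then show ?thesis using g_bound(3)[OF that] g_bound(2) by (meson mult_left_mono order_trans)
  qed
  have one_side: "G t \<le> (\<bar>G s\<bar> + C / (a - \<beta>)) * exp (- \<beta> * (t - s))"
    if acG: "abs_cont_on_interval G s t" and t: "t \<ge> s"
      and aeG: "AE \<tau> in lborel. s < \<tau> \<longrightarrow> (\<exists>D. (G has_real_derivative D) (at \<tau>) \<and> D \<le> - a * G \<tau> + \<bar>g \<tau>\<bar>)"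
    for G t
  proof -
    have "G t \<le> (max (G s) 0 + C / (a - \<beta>)) * exp (- \<beta> * (t - s))"
    proof (rule abs_cont_gronwall_exp[OF acG t \<beta>(1,2) g_bound(2)])
      show "AE \<tau> in lborel. \<tau> \<in> {s<..<t} \<longrightarrow>
          (\<exists>D. (G has_real_derivative D) (at \<tau>) \<and> D \<le> - a * G \<tau> + C * exp (- \<beta> * (\<tau> - s)))"
        using aeG
      proof (rule AE_mp, intro AE_I2 impI)
        fix \<tau> assume "s < \<tau> \<longrightarrow> (\<exists>D. (G has_real_derivative D) (at \<tau>) \<and> D \<le> - a * G \<tau> + \<bar>g \<tau>\<bar>)"
          and \<tau>: "\<tau> \<in> {s<..<t}"
        then obtain D where "(G has_real_derivative D) (at \<tau>)" "D \<le> - a * G \<tau> + \<bar>g \<tau>\<bar>"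
          by auto
        then show "\<exists>D. (G has_real_derivative D) (at \<tau>) \<and> D \<le> - a * G \<tau> + C * exp (- \<beta> * (\<tau> - s))"
          using g_le[of \<tau>] \<tau> by (intro exI[of _ D]) auto
      qed
    qed
    also have "\<dots> \<le> (\<bar>G s\<bar> + C / (a - \<beta>)) * exp (- \<beta> * (t - s))"
      by (intro mult_right_mono) auto
    finally show ?thesis .
  qed
  have "\<bar>F t\<bar> \<le> (\<bar>F s\<bar> + C / (a - \<beta>)) * exp (- \<beta> * (t - s))" if t: "t \<ge> s" for t
  proof -
    have "F t \<le> (\<bar>F s\<bar> + C / (a - \<beta>)) * exp (- \<beta> * (t - s))"
    proof (rule one_side[OF ac[OF t] t])
      show "AE \<tau> in lborel. s < \<tau> \<longrightarrow> (\<exists>D. (F has_real_derivative D) (at \<tau>) \<and> D \<le> - a * F \<tau> + \<bar>g \<tau>\<bar>)"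
        using ae by (rule AE_mp) (auto intro!: AE_I2)
    qed
    moreover have "- F t \<le> (\<bar>- F s\<bar> + C / (a - \<beta>)) * exp (- \<beta> * (t - s))"
    proof (rule one_side[OF abs_cont_on_interval_minus[OF ac[OF t]] t])
      show "AE \<tau> in lborel. s < \<tau> \<longrightarrow>
          (\<exists>D. ((\<lambda>t. - F t) has_real_derivative D) (at \<tau>) \<and> D \<le> - a * - F \<tau> + \<bar>g \<tau>\<bar>)"
        using ae
      proof (rule AE_mp, intro AE_I2 impI)
        fix \<tau> assume "s < \<tau> \<longrightarrow> (F has_real_derivative - a * F \<tau> + g \<tau>) (at \<tau>)" "s < \<tau>"
        then have "((\<lambda>t. - F t) has_real_derivative - (- a * F \<tau> + g \<tau>)) (at \<tau>)"
          by (intro DERIV_minus) simp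
        then show "\<exists>D. ((\<lambda>t. - F t) has_real_derivative D) (at \<tau>) \<and> D \<le> - a * - F \<tau> + \<bar>g \<tau>\<bar>"
          by (intro exI[of _ "- (- a * F \<tau> + g \<tau>)"]) auto
      qed
    qed
    ultimately show ?thesis by simp
  qed
  then show ?thesis unfolding exp_decaying_def using \<beta>(1) by blast
qed


section \<open>The drift as a superposition of mass transfers\<close>

text \<open>Every case
  of \<open>drift\<close> is the net effect of five families of such moves (\<open>drift_eq_transfers\<close>), so the
  drift of a weighted mass \<open>\<Sum> w p * x p\<close> is a sum of terms \<open>r * (w dst - w src)\<close>
  (\<open>sum_weight_drift\<close>).\<close>

definition transfer :: "nat \<times> nat \<Rightarrow> nat \<times> nat \<Rightarrow> real \<Rightarrow> nat \<times> nat \<Rightarrow> real" where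
  "transfer src dst r p = r * ((if p = dst then 1 else 0) - (if p = src then 1 else 0))"

lemma finite_idx[simp]: "finite (idx I)"
proof -
  have "idx I \<subseteq> {0..I} \<times> {0..I}" unfolding idx_def by auto
  then show ?thesis by (rule finite_subset) simp
qed

lemma idx_iff[simp]: "(i, j) \<in> idx I \<longleftrightarrow> i \<le> j \<and> j \<le> I"
  unfolding idx_def by simp

lemma transfer_eq: "transfer src dst r p = (if dst = p then r else 0) - (if src = p then r else 0)"
  unfolding transfer_def by auto

lemma sum_transfer_split:
  "(\<Sum>q\<in>F. transfer q (D q) (r q) p) = (\<Sum>q\<in>F. if D q = p then r q else 0) - (\<Sum>q\<in>F. if q = p then r q else 0)"
  by (simp add: transfer_eq sum_subtractf)

lemma sum_if_unique:
  assumes "finite F" "\<And>q. q \<in> F \<Longrightarrow> P q \<longleftrightarrow> q = c"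
  shows "(\<Sum>q\<in>F. if P q then r q else 0) = (if c \<in> F then r c else 0)"
proof -
  have "(\<Sum>q\<in>F. if P q then r q else 0) = (\<Sum>q\<in>F. if q = c then r q else 0)"
    using assms(2) by (intro sum.cong) auto
  also have "\<dots> = (if c \<in> F then r c else 0)" using assms(1) by (simp add: sum.delta')
  finally show ?thesis .
qed

lemma sum_if_none:
  assumes "\<And>q. q \<in> F \<Longrightarrow> \<not> P q"
  shows "(\<Sum>q\<in>F. if P q then r q else 0) = 0"
  using assms by (intro sum.neutral) auto

lemma sum_weight_transfer:
  assumes "finite S" "src \<in> S" "dst \<in> S"
  shows "(\<Sum>p\<in>S. w p * transfer src dst r p) = r * (w dst - w src)"
proof -
  have "\<And>p. w p * transfer src dst r p = (if dst = p then r * w dst else 0)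
      - (if src = p then r * w src else 0)"
    by (auto simp: transfer_eq)
  then have "(\<Sum>p\<in>S. w p * transfer src dst r p) = (\<Sum>p\<in>S. if dst = p then r * w dst else 0)
      - (\<Sum>p\<in>S. if src = p then r * w src else 0)"
    by (simp add: sum_subtractf)
  also have "\<dots> = r * w dst - r * w src" using assms by (simp add: sum.delta)
  finally show ?thesis by (simp add: algebra_simps)
qed

definition down_cells :: "nat \<Rightarrow> (nat \<times> nat) set" where "down_cells I = {p \<in> idx I. 1 \<le> fst p}"
definition diag_cells :: "nat \<Rightarrow> (nat \<times> nat) set" where "diag_cells I = {p \<in> idx I. fst p < snd p}"
definition up_cells :: "nat \<Rightarrow> (nat \<times> nat) set" where "up_cells I = {p \<in> idx I. 1 \<le> snd p \<and> p \<noteq> (I, I)}"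

lemma finite_transfer_cells[simp]: "finite (down_cells I)" "finite (diag_cells I)" "finite (up_cells I)"
  unfolding down_cells_def diag_cells_def up_cells_def by auto

lemma sum_down_transfers_at:
  assumes "i \<le> j" "j \<le> I"
  shows "(\<Sum>q\<in>down_cells I. transfer q (fst q - 1, snd q) (r q) (i, j))
       = (if i + 1 \<le> j then r (i + 1, j) else 0) - (if 1 \<le> i then r (i, j) else 0)"
proof -
  have A: "(\<Sum>q\<in>down_cells I. if (fst q - 1, snd q) = (i, j) then r q else 0)
      = (if (i+1, j) \<in> down_cells I then r (i+1,j) else 0)"
    by (rule sum_if_unique) (auto simp: down_cells_def)
  have B: "(\<Sum>q\<in>down_cells I. if q = (i, j) then r q else 0) = (if (i, j) \<in> down_cells I then r (i,j) else 0)"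
    by (simp add: sum.delta')
  show ?thesis unfolding sum_transfer_split A B using assms by (auto simp: down_cells_def)
qed

lemma sum_diag_transfers_at:
  assumes "i \<le> j" "j \<le> I"
  shows "(\<Sum>q\<in>diag_cells I. transfer q (fst q, fst q) (r q) (i, j))
       = (if i = j then (\<Sum>k\<in>{i<..I}. r (i, k)) else 0) - (if i < j then r (i, j) else 0)"
proof -
  have A: "(\<Sum>q\<in>diag_cells I. if (fst q, fst q) = (i, j) then r q else 0)
      = (if i = j then (\<Sum>k\<in>{i<..I}. r (i, k)) else 0)"
  proof (cases "i = j")
    case True
    have "(\<Sum>q\<in>diag_cells I. if (fst q, fst q) = (i, j) then r q else 0) = (\<Sum>q\<in>{i} \<times> {i<..I}. r q)"
    proof -
      have "(\<Sum>q\<in>diag_cells I. if (fst q, fst q) = (i, j) then r q else 0)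
          = (\<Sum>q\<in>{q\<in>diag_cells I. (fst q, fst q) = (i, j)}. r q)"
        by (simp add: sum.inter_filter)
      also have "{q\<in>diag_cells I. (fst q, fst q) = (i, j)} = {i} \<times> {i<..I}"
        using True by (auto simp: diag_cells_def)
      finally show ?thesis .
    qed
    also have "\<dots> = (\<Sum>k\<in>{i<..I}. r (i, k))" 
    proof -
      have "{i} \<times> {i<..I} = (\<lambda>k. (i,k)) ` {i<..I}" by auto
      then show ?thesis by (simp add: sum.reindex inj_on_def)
    qed
    finally show ?thesis using True by simp
  next
    case False
    then show ?thesis by (simp add: sum_if_none)
  qed
  have B: "(\<Sum>q\<in>diag_cells I. if q = (i, j) then r q else 0) = (if (i, j) \<in> diag_cells I then r (i,j) else 0)"
    by (simp add: sum.delta')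
  show ?thesis unfolding sum_transfer_split A B using assms by (auto simp: diag_cells_def)
qed

lemma sum_up_transfers_at:
  assumes "i \<le> j" "j \<le> I" "2 \<le> I"
  shows "(\<Sum>q\<in>up_cells I. transfer q (fst q + 1, min (snd q + 1) I) (r q) (i, j))
       = (if 1 \<le> i \<and> 2 \<le> j then r (i - 1, j - 1) else 0) + (if 1 \<le> i \<and> j = I then r (i - 1, I) else 0)
         - (if 1 \<le> j \<and> (i, j) \<noteq> (I, I) then r (i, j) else 0)"
proof -
  have A: "(\<Sum>q\<in>up_cells I. if (fst q + 1, min (snd q + 1) I) = (i, j) then r q else 0)
      = (if 1 \<le> i \<and> 2 \<le> j then r (i - 1, j - 1) else 0) + (if 1 \<le> i \<and> j = I then r (i - 1, I) else 0)"
  proof (cases "1 \<le> i \<and> j = I")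
    case True
    have "(\<Sum>q\<in>up_cells I. if (fst q + 1, min (snd q + 1) I) = (i, j) then r q else 0)
        = (\<Sum>q\<in>{(i-1, I-1), (i-1, I)}. r q)"
    proof -
      have "(\<Sum>q\<in>up_cells I. if (fst q + 1, min (snd q + 1) I) = (i, j) then r q else 0)
          = (\<Sum>q\<in>{q\<in>up_cells I. (fst q + 1, min (snd q + 1) I) = (i, j)}. r q)"
        by (simp add: sum.inter_filter)
      also have "{q\<in>up_cells I. (fst q + 1, min (snd q + 1) I) = (i, j)} = {(i-1, I-1), (i-1, I)}"
        using True assms by (auto simp: up_cells_def min_def split: if_splits)
      finally show ?thesis .
    qed
    also have "\<dots> = r (i-1, I-1) + r (i-1, I)" using assms by simp
    finally show ?thesis using True assms by simp
  next
    case False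
    show ?thesis
    proof (cases "1 \<le> i \<and> 2 \<le> j")
      case True
      have "(\<Sum>q\<in>up_cells I. if (fst q + 1, min (snd q + 1) I) = (i, j) then r q else 0)
          = (if (i-1, j-1) \<in> up_cells I then r (i-1, j-1) else 0)"
        by (rule sum_if_unique) (use True False assms in \<open>auto simp: up_cells_def min_def split: if_splits\<close>)
      then show ?thesis using True False assms by (auto simp: up_cells_def)
    next
      case False2: False
      have "(\<Sum>q\<in>up_cells I. if (fst q + 1, min (snd q + 1) I) = (i, j) then r q else 0) = 0"
        by (rule sum_if_none) (use False False2 assms in \<open>auto simp: up_cells_def min_def split: if_splits\<close>)
      then show ?thesis using False False2 by auto
    qed
  qed
  have B: "(\<Sum>q\<in>up_cells I. if q = (i, j) then r q else 0) = (if (i, j) \<in> up_cells I then r (i,j) else 0)"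
    by (simp add: sum.delta')
  show ?thesis unfolding sum_transfer_split A B using assms by (auto simp: up_cells_def)
qed

lemma sum_promotions_at:
  assumes "i \<le> j" "j \<le> I" "2 \<le> I"
  shows "(\<Sum>k\<in>{1..I-1}. transfer (k, k) (k+1, k+1) (g k) (i, j))
       = (if i = j \<and> 2 \<le> i then g (i - 1) else 0) - (if i = j \<and> 1 \<le> i \<and> i \<le> I - 1 then g i else 0)"
proof -
  have A: "(\<Sum>k\<in>{1..I-1}. if (k+1, k+1) = (i, j) then g k else 0) = (if i = j \<and> 2 \<le> i then g (i - 1) else 0)"
  proof (cases "i = j \<and> 2 \<le> i")
    case True
    have "(\<Sum>k\<in>{1..I-1}. if (k+1, k+1) = (i, j) then g k else 0) = (if i - 1 \<in> {1..I-1} then g (i-1) else 0)"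
      by (rule sum_if_unique) (use True in auto)
    then show ?thesis using True assms by auto
  next
    case False
    have "(\<Sum>k\<in>{1..I-1}. if (k+1, k+1) = (i, j) then g k else 0) = 0"
      by (rule sum_if_none) (use False in auto)
    then show ?thesis using False by auto
  qed
  have B: "(\<Sum>k\<in>{1..I-1}. if (k, k) = (i, j) then g k else 0) = (if i = j \<and> 1 \<le> i \<and> i \<le> I - 1 then g i else 0)"
  proof (cases "i = j \<and> 1 \<le> i \<and> i \<le> I - 1")
    case True
    have "(\<Sum>k\<in>{1..I-1}. if (k, k) = (i, j) then g k else 0) = (if i \<in> {1..I-1} then g i else 0)"
      by (rule sum_if_unique) (use True in auto)
    then show ?thesis using True assms by auto
  next
    case False
    have "(\<Sum>k\<in>{1..I-1}. if (k, k) = (i, j) then g k else 0) = 0"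
      by (rule sum_if_none) (use False in auto)
    then show ?thesis using False by auto
  qed
  show ?thesis unfolding transfer_eq sum_subtractf A[symmetric] B[symmetric] by simp
qed

definition drift_transfers :: "real \<Rightarrow> nat \<Rightarrow> nat \<Rightarrow> (nat \<Rightarrow> nat \<Rightarrow> real) \<Rightarrow> nat \<times> nat \<Rightarrow> real" where
  "drift_transfers lam d I y p =
    (\<Sum>q\<in>down_cells I. transfer q (fst q - 1, snd q) (y (fst q) (snd q)) p)
  + (\<Sum>q\<in>diag_cells I. transfer q (fst q, fst q) (lam * real d * y (fst q) (snd q)) p)
  + transfer (0,0) (1,1) (lam - Rf lam d I 0 y) p
  + (\<Sum>q\<in>up_cells I. transfer q (fst q + 1, min (snd q + 1) I) (rho lam d I (snd q - 1) (fst q) (snd q) y) p)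
  + (\<Sum>k\<in>{1..I-1}. transfer (k,k) (k+1,k+1) (Gf lam d I k y) p)"

lemma xrow_eq_diag_plus: "i \<le> I \<Longrightarrow> xrow I y i = y i i + (\<Sum>k\<in>{i<..I}. y i k)"
proof -
  assume "i \<le> I"
  then have "{i..I} = insert i {i<..I}" by auto
  then show ?thesis unfolding xrow_def by simp
qed

lemma drift_0_0: "drift lam d I y 0 0 = lam * real d * (xrow I y 0 - y 0 0) - lam + Rf lam d I 0 y"
  by (simp add: drift_def)

lemma drift_less: "i < j \<Longrightarrow> drift lam d I y i j =
       y (i + 1) j - (if i > 0 then y i j else 0) - lam * real d * y i j
       - rho lam d I (j - 1) i j y
       + (if i > 0 then rho lam d I (j - 2) (i - 1) (j - 1) y else 0)
       + (if j = I \<and> i > 0 then rho lam d I (I - 1) (i - 1) I y else 0)"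
  by (simp add: drift_def)

lemma drift_1_1: "drift lam d I y 1 1 =
       - y 1 1 + lam * real d * (xrow I y 1 - y 1 1) + lam - Rf lam d I 0 y
       - rho lam d I 0 1 1 y - Gf lam d I 1 y"
  by (simp add: drift_def)

lemma drift_diag: "2 \<le> i \<Longrightarrow> i \<le> I - 1 \<Longrightarrow> drift lam d I y i i =
       - y i i + lam * real d * (xrow I y i - y i i)
       - rho lam d I (i - 1) i i y + rho lam d I (i - 2) (i - 1) (i - 1) y
       + Gf lam d I (i - 1) y - Gf lam d I i y"
  by (simp add: drift_def)

lemma drift_I_I: "2 \<le> I \<Longrightarrow> drift lam d I y I I =
       - y I I + rho lam d I (I - 2) (I - 1) (I - 1) y + Gf lam d I (I - 1) y
       + rho lam d I (I - 1) (I - 1) I y"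
proof -
  assume "2 \<le> I"
  then have "\<not> I \<le> I - Suc 0" "I \<noteq> 0" "I \<noteq> 1" by arith+
  then show ?thesis by (simp add: drift_def)
qed

lemma drift_transfers_0_0:
  assumes I: "2 \<le> I"
  shows "drift lam d I y 0 0 = drift_transfers lam d I y (0, 0)"
proof -
  have D: "(\<Sum>q\<in>down_cells I. transfer q (fst q - 1, snd q) (y (fst q) (snd q)) (0, 0)) = 0"
    using sum_down_transfers_at[of 0 0 I "\<lambda>q. y (fst q) (snd q)"] by simp
  have U: "(\<Sum>q\<in>diag_cells I. transfer q (fst q, fst q) (lam * real d * y (fst q) (snd q)) (0, 0))
       = (\<Sum>k\<in>{0<..I}. lam * real d * y 0 k)"
    using sum_diag_transfers_at[of 0 0 I "\<lambda>q. lam * real d * y (fst q) (snd q)"] by simp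
  have Rh: "(\<Sum>q\<in>up_cells I. transfer q (fst q + 1, min (snd q + 1) I) (rho lam d I (snd q - 1) (fst q) (snd q) y) (0, 0)) = 0"
    using sum_up_transfers_at[of 0 0 I "\<lambda>q. rho lam d I (snd q - 1) (fst q) (snd q) y"] I by simp
  have G: "(\<Sum>k\<in>{1..I-1}. transfer (k,k) (k+1,k+1) (Gf lam d I k y) (0, 0)) = 0"
    using sum_promotions_at[of 0 0 I] I by simp
  have B: "transfer (0,0) (1,1) (lam - Rf lam d I 0 y) (0, 0) = - (lam - Rf lam d I 0 y)"
    by (auto simp: transfer_eq)
  have X: "xrow I y 0 - y 0 0 = (\<Sum>k\<in>{0<..I}. y 0 k)" using xrow_eq_diag_plus[of 0 I y] by simp
  show ?thesis unfolding drift_transfers_def D U Rh G B drift_0_0 X by (simp add: sum_distrib_left)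
qed

lemma drift_transfers_0_j:
  assumes I: "2 \<le> I" and j: "1 \<le> j" "j \<le> I"
  shows "drift lam d I y 0 j = drift_transfers lam d I y (0, j)"
proof -
  have D: "(\<Sum>q\<in>down_cells I. transfer q (fst q - 1, snd q) (y (fst q) (snd q)) (0, j)) = y 1 j"
    using sum_down_transfers_at[of 0 j I "\<lambda>q. y (fst q) (snd q)"] j by simp
  have U: "(\<Sum>q\<in>diag_cells I. transfer q (fst q, fst q) (lam * real d * y (fst q) (snd q)) (0, j))
      = - (lam * real d * y 0 j)"
    using sum_diag_transfers_at[of 0 j I "\<lambda>q. lam * real d * y (fst q) (snd q)"] j by simp
  have Rh: "(\<Sum>q\<in>up_cells I. transfer q (fst q + 1, min (snd q + 1) I) (rho lam d I (snd q - 1) (fst q) (snd q) y) (0, j))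
     = - rho lam d I (j - 1) 0 j y"
    using sum_up_transfers_at[of 0 j I "\<lambda>q. rho lam d I (snd q - 1) (fst q) (snd q) y"] I j
      by simp
  have G: "(\<Sum>k\<in>{1..I-1}. transfer (k,k) (k+1,k+1) (Gf lam d I k y) (0, j)) = 0"
    using sum_promotions_at[of 0 j I] I j by simp
  have B: "transfer (0,0) (1,1) (lam - Rf lam d I 0 y) (0, j) = 0"
    using j by (auto simp: transfer_eq)
  have lt: "0 < j" using j by simp
  show ?thesis unfolding drift_transfers_def D U Rh G B drift_less[OF lt] by simp
qed

lemma drift_transfers_less:
  assumes I: "2 \<le> I" and ij: "1 \<le> i" "i < j" "j \<le> I"
  shows "drift lam d I y i j = drift_transfers lam d I y (i, j)"
proof -
  have D: "(\<Sum>q\<in>down_cells I. transfer q (fst q - 1, snd q) (y (fst q) (snd q)) (i, j)) = y (i + 1) j - y i j"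
    using sum_down_transfers_at[of i j I "\<lambda>q. y (fst q) (snd q)"] ij by simp
  have U: "(\<Sum>q\<in>diag_cells I. transfer q (fst q, fst q) (lam * real d * y (fst q) (snd q)) (i, j))
      = - (lam * real d * y i j)"
    using sum_diag_transfers_at[of i j I "\<lambda>q. lam * real d * y (fst q) (snd q)"] ij by simp
  have Rh: "(\<Sum>q\<in>up_cells I. transfer q (fst q + 1, min (snd q + 1) I) (rho lam d I (snd q - 1) (fst q) (snd q) y) (i, j))
     = rho lam d I (j - 2) (i - 1) (j - 1) y + (if j = I then rho lam d I (I - 1) (i - 1) I y else 0)
       - rho lam d I (j - 1) i j y"
  proof -
    have "2 \<le> j" "(i, j) \<noteq> (I, I)" using ij by auto
    then show ?thesis
      using sum_up_transfers_at[of i j I "\<lambda>q. rho lam d I (snd q - 1) (fst q) (snd q) y"] I ij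
      by (simp add: diff_diff_add numeral_2_eq_2)
  qed
  have G: "(\<Sum>k\<in>{1..I-1}. transfer (k,k) (k+1,k+1) (Gf lam d I k y) (i, j)) = 0"
    using sum_promotions_at[of i j I] I ij by simp
  have B: "transfer (0,0) (1,1) (lam - Rf lam d I 0 y) (i, j) = 0"
    using ij by (auto simp: transfer_eq)
  have lt: "i < j" using ij by simp
  have ip: "i > 0" using ij by simp
  show ?thesis unfolding drift_transfers_def D U Rh G B drift_less[OF lt] using ip by simp
qed

lemma drift_transfers_1_1:
  assumes I: "2 \<le> I"
  shows "drift lam d I y 1 1 = drift_transfers lam d I y (1, 1)"
proof -
  have D: "(\<Sum>q\<in>down_cells I. transfer q (fst q - 1, snd q) (y (fst q) (snd q)) (1, 1)) = - y 1 1"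
    using sum_down_transfers_at[of 1 1 I "\<lambda>q. y (fst q) (snd q)"] I by simp
  have U: "(\<Sum>q\<in>diag_cells I. transfer q (fst q, fst q) (lam * real d * y (fst q) (snd q)) (1, 1))
       = (\<Sum>k\<in>{1<..I}. lam * real d * y 1 k)"
    using sum_diag_transfers_at[of 1 1 I "\<lambda>q. lam * real d * y (fst q) (snd q)"] I by simp
  have Rh: "(\<Sum>q\<in>up_cells I. transfer q (fst q + 1, min (snd q + 1) I) (rho lam d I (snd q - 1) (fst q) (snd q) y) (1, 1))
     = - rho lam d I 0 1 1 y"
    using sum_up_transfers_at[of 1 1 I "\<lambda>q. rho lam d I (snd q - 1) (fst q) (snd q) y"] I by simp
  have G: "(\<Sum>k\<in>{1..I-1}. transfer (k,k) (k+1,k+1) (Gf lam d I k y) (1, 1)) = - Gf lam d I 1 y"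
    using sum_promotions_at[of 1 1 I] I by simp
  have B: "transfer (0,0) (1,1) (lam - Rf lam d I 0 y) (1, 1) = lam - Rf lam d I 0 y"
    by (auto simp: transfer_eq)
  have X: "xrow I y 1 - y 1 1 = (\<Sum>k\<in>{1<..I}. y 1 k)" using xrow_eq_diag_plus[of 1 I y] I by simp
  show ?thesis unfolding drift_transfers_def D U Rh G B drift_1_1 X by (simp add: sum_distrib_left)
qed

lemma drift_transfers_diag:
  assumes I: "2 \<le> I" and i: "2 \<le> i" "i \<le> I - 1"
  shows "drift lam d I y i i = drift_transfers lam d I y (i, i)"
proof -
  have iI: "i \<le> I" "i \<noteq> I" using i I by auto
  have D: "(\<Sum>q\<in>down_cells I. transfer q (fst q - 1, snd q) (y (fst q) (snd q)) (i, i)) = - y i i"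
    using sum_down_transfers_at[of i i I "\<lambda>q. y (fst q) (snd q)"] i iI by simp
  have U: "(\<Sum>q\<in>diag_cells I. transfer q (fst q, fst q) (lam * real d * y (fst q) (snd q)) (i, i))
       = (\<Sum>k\<in>{i<..I}. lam * real d * y i k)"
    using sum_diag_transfers_at[of i i I "\<lambda>q. lam * real d * y (fst q) (snd q)"] iI by simp
  have Rh: "(\<Sum>q\<in>up_cells I. transfer q (fst q + 1, min (snd q + 1) I) (rho lam d I (snd q - 1) (fst q) (snd q) y) (i, i))
     = rho lam d I (i - 2) (i - 1) (i - 1) y - rho lam d I (i - 1) i i y"
    using sum_up_transfers_at[of i i I "\<lambda>q. rho lam d I (snd q - 1) (fst q) (snd q) y"] I i iI
      by (simp add: diff_diff_add numeral_2_eq_2)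
  have G: "(\<Sum>k\<in>{1..I-1}. transfer (k,k) (k+1,k+1) (Gf lam d I k y) (i, i)) = Gf lam d I (i - 1) y
      - Gf lam d I i y"
    using sum_promotions_at[of i i I] I i iI by simp
  have B: "transfer (0,0) (1,1) (lam - Rf lam d I 0 y) (i, i) = 0"
    using i by (auto simp: transfer_eq)
  have X: "xrow I y i - y i i = (\<Sum>k\<in>{i<..I}. y i k)" using xrow_eq_diag_plus[of i I y] iI
    by simp
  show ?thesis unfolding drift_transfers_def D U Rh G B drift_diag[OF i] X
    by (simp add: sum_distrib_left)
qed

lemma drift_transfers_I_I:
  assumes I: "2 \<le> I"
  shows "drift lam d I y I I = drift_transfers lam d I y (I, I)"
proof -
  have D: "(\<Sum>q\<in>down_cells I. transfer q (fst q - 1, snd q) (y (fst q) (snd q)) (I, I)) = - y I I"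
    using sum_down_transfers_at[of I I I "\<lambda>q. y (fst q) (snd q)"] I by simp
  have U: "(\<Sum>q\<in>diag_cells I. transfer q (fst q, fst q) (lam * real d * y (fst q) (snd q)) (I, I)) = 0"
    using sum_diag_transfers_at[of I I I "\<lambda>q. lam * real d * y (fst q) (snd q)"] by simp
  have Rh: "(\<Sum>q\<in>up_cells I. transfer q (fst q + 1, min (snd q + 1) I) (rho lam d I (snd q - 1) (fst q) (snd q) y) (I, I))
     = rho lam d I (I - 2) (I - 1) (I - 1) y + rho lam d I (I - 1) (I - 1) I y"
    using sum_up_transfers_at[of I I I "\<lambda>q. rho lam d I (snd q - 1) (fst q) (snd q) y"] I
      by (simp add: diff_diff_add numeral_2_eq_2)
  have G: "(\<Sum>k\<in>{1..I-1}. transfer (k,k) (k+1,k+1) (Gf lam d I k y) (I, I)) = Gf lam d I (I - 1) y"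
    using sum_promotions_at[of I I I] I by simp
  have B: "transfer (0,0) (1,1) (lam - Rf lam d I 0 y) (I, I) = 0"
    using I by (auto simp: transfer_eq)
  show ?thesis unfolding drift_transfers_def D U Rh G B drift_I_I[OF I] by simp
qed

lemma drift_eq_transfers:
  assumes I: "2 \<le> I" and ij: "i \<le> j" "j \<le> I"
  shows "drift lam d I y i j = drift_transfers lam d I y (i, j)"
proof -
  consider (a) "i = 0 \<and> j = 0" | (b) "i = 0 \<and> 1 \<le> j" | (b2) "1 \<le> i \<and> i < j" | (c) "i = 1 \<and> j = 1"
    | (e) "i = j \<and> 2 \<le> i \<and> i \<le> I - 1" | (f) "i = I \<and> j = I" using ij by linarith
  then show ?thesis
  proof cases
    case a then show ?thesis using drift_transfers_0_0[OF I] by simp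
  next
    case b then show ?thesis using drift_transfers_0_j[OF I, of j] ij by simp
  next
    case b2 then show ?thesis using drift_transfers_less[OF I, of i j] ij by simp
  next
    case c then show ?thesis using drift_transfers_1_1[OF I] by simp
  next
    case e then show ?thesis using drift_transfers_diag[OF I, of i] by simp
  next
    case f then show ?thesis using drift_transfers_I_I[OF I] by simp
  qed
qed

lemma sum_idx: "(\<Sum>p\<in>idx I. f p) = (\<Sum>i=0..I. \<Sum>j=i..I. f (i, j))"
proof -
  have "idx I = Sigma {0..I} (\<lambda>i. {i..I})" unfolding idx_def by auto
  then show ?thesis by (simp add: sum.Sigma)
qed

lemma sum_weight_transfer_family:
  assumes "finite S" "finite F" "\<And>q. q \<in> F \<Longrightarrow> q \<in> S" "\<And>q. q \<in> F \<Longrightarrow> D q \<in> S"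
  shows "(\<Sum>p\<in>S. w p * (\<Sum>q\<in>F. transfer q (D q) (r q) p)) = (\<Sum>q\<in>F. r q * (w (D q) - w q))"
proof -
  have "(\<Sum>p\<in>S. w p * (\<Sum>q\<in>F. transfer q (D q) (r q) p)) = (\<Sum>p\<in>S. \<Sum>q\<in>F. w p * transfer q (D q) (r q) p)"
    by (simp add: sum_distrib_left)
  also have "\<dots> = (\<Sum>q\<in>F. \<Sum>p\<in>S. w p * transfer q (D q) (r q) p)" by (rule sum.swap)
  also have "\<dots> = (\<Sum>q\<in>F. r q * (w (D q) - w q))"
    using assms by (intro sum.cong refl sum_weight_transfer) auto
  finally show ?thesis .
qed

lemma sum_weight_drift:
  assumes I: "2 \<le> I"
  shows "(\<Sum>p\<in>idx I. w p * drift lam d I y (fst p) (snd p)) =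
     (\<Sum>q\<in>down_cells I. y (fst q) (snd q) * (w (fst q - 1, snd q) - w q))
   + (\<Sum>q\<in>diag_cells I. (lam * real d * y (fst q) (snd q)) * (w (fst q, fst q) - w q))
   + (lam - Rf lam d I 0 y) * (w (1, 1) - w (0, 0))
   + (\<Sum>q\<in>up_cells I. rho lam d I (snd q - 1) (fst q) (snd q) y * (w (fst q + 1, min (snd q + 1) I) - w q))
   + (\<Sum>k\<in>{1..I-1}. Gf lam d I k y * (w (k + 1, k + 1) - w (k, k)))"
proof -
  have "(\<Sum>p\<in>idx I. w p * drift lam d I y (fst p) (snd p)) = (\<Sum>p\<in>idx I. w p * drift_transfers lam d I y p)"
    by (intro sum.cong refl) (auto simp: drift_eq_transfers[OF I] idx_def)
  also have "\<dots> =
     (\<Sum>p\<in>idx I. w p * (\<Sum>q\<in>down_cells I. transfer q (fst q - 1, snd q) (y (fst q) (snd q)) p))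
   + (\<Sum>p\<in>idx I. w p * (\<Sum>q\<in>diag_cells I. transfer q (fst q, fst q) (lam * real d * y (fst q) (snd q)) p))
   + (\<Sum>p\<in>idx I. w p * transfer (0,0) (1,1) (lam - Rf lam d I 0 y) p)
   + (\<Sum>p\<in>idx I. w p * (\<Sum>q\<in>up_cells I. transfer q (fst q + 1, min (snd q + 1) I) (rho lam d I (snd q - 1) (fst q) (snd q) y) p))
   + (\<Sum>p\<in>idx I. w p * (\<Sum>k\<in>{1..I-1}. transfer (k,k) (k+1,k+1) (Gf lam d I k y) p))"
    unfolding drift_transfers_def by (simp add: distrib_left sum.distrib)
  also have "(\<Sum>p\<in>idx I. w p * (\<Sum>q\<in>down_cells I. transfer q (fst q - 1, snd q) (y (fst q) (snd q)) p))
      = (\<Sum>q\<in>down_cells I. y (fst q) (snd q) * (w (fst q - 1, snd q) - w q))"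
    by (rule sum_weight_transfer_family) (auto simp: down_cells_def)
  also have "(\<Sum>p\<in>idx I. w p * (\<Sum>q\<in>diag_cells I. transfer q (fst q, fst q) (lam * real d * y (fst q) (snd q)) p))
      = (\<Sum>q\<in>diag_cells I. (lam * real d * y (fst q) (snd q)) * (w (fst q, fst q) - w q))"
    by (rule sum_weight_transfer_family) (auto simp: diag_cells_def)
  also have "(\<Sum>p\<in>idx I. w p * transfer (0,0) (1,1) (lam - Rf lam d I 0 y) p)
      = (lam - Rf lam d I 0 y) * (w (1, 1) - w (0, 0))"
    using I by (intro sum_weight_transfer) auto
  also have "(\<Sum>p\<in>idx I. w p * (\<Sum>q\<in>up_cells I. transfer q (fst q + 1, min (snd q + 1) I) (rho lam d I (snd q - 1) (fst q) (snd q) y) p))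
      = (\<Sum>q\<in>up_cells I. rho lam d I (snd q - 1) (fst q) (snd q) y * (w (fst q + 1, min (snd q + 1) I) - w q))"
    by (rule sum_weight_transfer_family) (auto simp: up_cells_def min_def)
  also have "(\<Sum>p\<in>idx I. w p * (\<Sum>k\<in>{1..I-1}. transfer (k,k) (k+1,k+1) (Gf lam d I k y) p))
      = (\<Sum>k\<in>{1..I-1}. Gf lam d I k y * (w (k + 1, k + 1) - w (k, k)))"
  proof -
    have "(\<Sum>p\<in>idx I. w p * (\<Sum>k\<in>{1..I-1}. transfer (k,k) (k+1,k+1) (Gf lam d I k y) p))
       = (\<Sum>p\<in>idx I. \<Sum>k\<in>{1..I-1}. w p * transfer (k,k) (k+1,k+1) (Gf lam d I k y) p)"
      by (simp add: sum_distrib_left)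
    also have "\<dots> = (\<Sum>k\<in>{1..I-1}. \<Sum>p\<in>idx I. w p * transfer (k,k) (k+1,k+1) (Gf lam d I k y) p)"
      by (rule sum.swap)
    also have "\<dots> = (\<Sum>k\<in>{1..I-1}. Gf lam d I k y * (w (k + 1, k + 1) - w (k, k)))"
      by (intro sum.cong refl sum_weight_transfer) auto
    finally show ?thesis .
  qed
  finally show ?thesis .
qed

section \<open>Weighted masses\<close>

definition wmass :: "nat \<Rightarrow> (nat \<times> nat \<Rightarrow> real) \<Rightarrow> (nat \<Rightarrow> nat \<Rightarrow> real) \<Rightarrow> real" where
  "wmass I w y = (\<Sum>p\<in>idx I. w p * y (fst p) (snd p))"

definition wdrift :: "real \<Rightarrow> nat \<Rightarrow> nat \<Rightarrow> (nat \<times> nat \<Rightarrow> real) \<Rightarrow> (nat \<Rightarrow> nat \<Rightarrow> real) \<Rightarrow> real" where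
  "wdrift lam d I w y = (\<Sum>p\<in>idx I. w p * drift lam d I y (fst p) (snd p))"

definition w_level :: "nat \<times> nat \<Rightarrow> real" where "w_level p = real (fst p)"
definition w_empty :: "nat \<times> nat \<Rightarrow> real" where "w_empty p = (if fst p = 0 then 1 else 0)"
definition w_single :: "nat \<times> nat \<Rightarrow> real" where "w_single p = (if fst p = 1 then 1 else 0)"
definition w_busy :: "nat \<times> nat \<Rightarrow> real" where "w_busy p = (if 1 \<le> fst p then 1 else 0)"

lemma wdrift_level:
  assumes I: "2 \<le> I"
  shows "wdrift lam d I w_level y = - wmass I w_busy y + (lam - Rf lam d I 0 y)
     + (\<Sum>q\<in>up_cells I. rho lam d I (snd q - 1) (fst q) (snd q) y) + (\<Sum>k\<in>{1..I-1}. Gf lam d I k y)"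
proof -
  have dep: "(\<Sum>q\<in>down_cells I. y (fst q) (snd q) * (w_level (fst q - 1, snd q) - w_level q))
      = - wmass I w_busy y"
  proof -
    have "(\<Sum>q\<in>down_cells I. y (fst q) (snd q) * (w_level (fst q - 1, snd q) - w_level q))
        = (\<Sum>q\<in>down_cells I. - y (fst q) (snd q))"
      by (intro sum.cong refl) (auto simp: w_level_def down_cells_def of_nat_diff)
    also have "\<dots> = - (\<Sum>q\<in>down_cells I. y (fst q) (snd q))" by (simp add: sum_negf)
    also have "(\<Sum>q\<in>down_cells I. y (fst q) (snd q)) = wmass I w_busy y"
    proof -
      have "wmass I w_busy y = (\<Sum>q\<in>idx I. if 1 \<le> fst q then y (fst q) (snd q) else 0)"
        unfolding wmass_def w_busy_def by (intro sum.cong refl) auto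
      also have "\<dots> = (\<Sum>q\<in>down_cells I. y (fst q) (snd q))"
        unfolding down_cells_def by (simp add: sum.inter_filter)
      finally show ?thesis by simp
    qed
    finally show ?thesis .
  qed
  have upd: "(\<Sum>q\<in>diag_cells I. (lam * real d * y (fst q) (snd q)) * (w_level (fst q, fst q) - w_level q)) = 0"
    by (simp add: w_level_def)
  have rh: "(\<Sum>q\<in>up_cells I. rho lam d I (snd q - 1) (fst q) (snd q) y * (w_level (fst q + 1, min (snd q + 1) I) - w_level q))
      = (\<Sum>q\<in>up_cells I. rho lam d I (snd q - 1) (fst q) (snd q) y)"
    by (simp add: w_level_def)
  have g: "(\<Sum>k\<in>{1..I-1}. Gf lam d I k y * (w_level (k + 1, k + 1) - w_level (k, k)))
      = (\<Sum>k\<in>{1..I-1}. Gf lam d I k y)"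
    by (simp add: w_level_def)
  show ?thesis unfolding wdrift_def sum_weight_drift[OF I] dep upd rh g by (simp add: w_level_def)
qed

lemma wdrift_empty:
  assumes I: "2 \<le> I"
  shows "wdrift lam d I w_empty y = wmass I w_single y - (lam - Rf lam d I 0 y)
     - (\<Sum>q\<in>up_cells I. if fst q = 0 then rho lam d I (snd q - 1) (fst q) (snd q) y else 0)"
proof -
  have dep: "(\<Sum>q\<in>down_cells I. y (fst q) (snd q) * (w_empty (fst q - 1, snd q) - w_empty q))
      = wmass I w_single y"
  proof -
    have "(\<Sum>q\<in>down_cells I. y (fst q) (snd q) * (w_empty (fst q - 1, snd q) - w_empty q))
        = (\<Sum>q\<in>down_cells I. if fst q = 1 then y (fst q) (snd q) else 0)"
      by (intro sum.cong refl) (auto simp: w_empty_def down_cells_def)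
    also have "\<dots> = (\<Sum>q\<in>idx I. if fst q = 1 then y (fst q) (snd q) else 0)"
      unfolding down_cells_def by (intro sum.mono_neutral_cong_left) auto
    also have "\<dots> = wmass I w_single y"
      unfolding wmass_def w_single_def by (intro sum.cong refl) auto
    finally show ?thesis .
  qed
  have upd: "(\<Sum>q\<in>diag_cells I. (lam * real d * y (fst q) (snd q)) * (w_empty (fst q, fst q) - w_empty q)) = 0"
    by (simp add: w_empty_def)
  have rh: "(\<Sum>q\<in>up_cells I. rho lam d I (snd q - 1) (fst q) (snd q) y * (w_empty (fst q + 1, min (snd q + 1) I) - w_empty q))
      = - (\<Sum>q\<in>up_cells I. if fst q = 0 then rho lam d I (snd q - 1) (fst q) (snd q) y else 0)"
    by (simp add: w_empty_def sum_negf[symmetric] if_distrib cong: if_cong)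
  have g: "(\<Sum>k\<in>{1..I-1}. Gf lam d I k y * (w_empty (k + 1, k + 1) - w_empty (k, k))) = 0"
    by (intro sum.neutral) (auto simp: w_empty_def)
  show ?thesis unfolding wdrift_def sum_weight_drift[OF I] dep upd rh g by (simp add: w_empty_def)
qed

section \<open>The routing rates\<close>

definition weighted_load :: "nat \<Rightarrow> nat \<Rightarrow> (nat \<Rightarrow> nat \<Rightarrow> real) \<Rightarrow> real" where
  "weighted_load I k y = (\<Sum>i=0..k. real (k + 1 - i) * xrow I y i)"
definition rows_upto :: "nat \<Rightarrow> nat \<Rightarrow> (nat \<Rightarrow> nat \<Rightarrow> real) \<Rightarrow> real" where
  "rows_upto I k y = (\<Sum>i=0..k. xrow I y i)"
definition cols_upto :: "nat \<Rightarrow> (nat \<Rightarrow> nat \<Rightarrow> real) \<Rightarrow> real" where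
  "cols_upto k y = (\<Sum>i=0..k. xcol y i)"

lemma Rf_eq: "Rf lam d I k y = (if cols_upto k y = 0 then max 0 (lam * (1 - real d * weighted_load I k y)) else 0)"
  unfolding Rf_def cols_upto_def weighted_load_def by simp

lemma Gf_eq: "Gf lam d I k y = (if cols_upto k y = 0 \<and> real d * weighted_load I k y \<le> 1 then lam * real d * rows_upto I k y else 0)"
  unfolding Gf_def cols_upto_def weighted_load_def rows_upto_def by simp

lemma weighted_load_Suc: "weighted_load I (Suc k) y = weighted_load I k y + rows_upto I (Suc k) y"
proof -
  have "weighted_load I (Suc k) y = (\<Sum>i=0..k. real (k + 2 - i) * xrow I y i) + xrow I y (Suc k)"
    unfolding weighted_load_def by simp
  also have "(\<Sum>i=0..k. real (k + 2 - i) * xrow I y i) = (\<Sum>i=0..k. real (k + 1 - i) * xrow I y i + xrow I y i)"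
    by (intro sum.cong refl) (auto simp: of_nat_diff algebra_simps)
  also have "\<dots> = weighted_load I k y + rows_upto I k y" unfolding weighted_load_def rows_upto_def
    by (simp add: sum.distrib)
  finally show ?thesis unfolding rows_upto_def by simp
qed

lemma cols_upto_Suc: "cols_upto (Suc k) y = cols_upto k y + xcol y (Suc k)"
  unfolding cols_upto_def by simp

context
  fixes y :: "nat \<Rightarrow> nat \<Rightarrow> real" and I :: nat
  assumes nonneg: "\<And>i j. y i j \<ge> 0"
begin

lemma xrow_nonneg: "xrow I y i \<ge> 0" unfolding xrow_def using nonneg by (simp add: sum_nonneg)
lemma xcol_nonneg: "xcol y i \<ge> 0" unfolding xcol_def using nonneg by (simp add: sum_nonneg)
lemma rows_upto_nonneg: "rows_upto I k y \<ge> 0" unfolding rows_upto_def using xrow_nonneg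
  by (simp add: sum_nonneg)
lemma weighted_load_nonneg: "weighted_load I k y \<ge> 0" unfolding weighted_load_def using xrow_nonneg
  by (intro sum_nonneg mult_nonneg_nonneg) auto
lemma cols_upto_nonneg: "cols_upto k y \<ge> 0" unfolding cols_upto_def using xcol_nonneg
  by (simp add: sum_nonneg)

lemma weighted_load_ge_xrow0: "weighted_load I k y \<ge> real (k + 1) * xrow I y 0"
proof -
  have "weighted_load I k y = real (k + 1) * xrow I y 0 + (\<Sum>i=1..k. real (k + 1 - i) * xrow I y i)"
    unfolding weighted_load_def by (simp add: sum.atLeast_Suc_atMost)
  moreover have "(\<Sum>i=1..k. real (k + 1 - i) * xrow I y i) \<ge> 0" using xrow_nonneg
    by (intro sum_nonneg mult_nonneg_nonneg) auto
  ultimately show ?thesis by simp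
qed

lemma Rf_nonneg: "lam > 0 \<Longrightarrow> Rf lam d I k y \<ge> 0" unfolding Rf_eq by auto
lemma Rf_le_lam: "lam > 0 \<Longrightarrow> Rf lam d I k y \<le> lam"
  unfolding Rf_eq using weighted_load_nonneg[of k]
    by (auto simp: mult_le_cancel_left1 algebra_simps)
lemma rho_nonneg: "lam > 0 \<Longrightarrow> rho lam d I k a b y \<ge> 0"
  unfolding rho_def using Rf_nonneg[of lam d k] nonneg[of a b]
    by (auto intro: divide_nonneg_pos mult_nonneg_nonneg)

text \<open>The rates telescope: \<open>R\<^sub>k\<close> is split into the mass routed to column \<open>k + 1\<close>, the
  promotion rate \<open>G\<^sub>k\<^sub>+\<^sub>1\<close> and \<open>R\<^sub>k\<^sub>+\<^sub>1\<close>, so all routed mass together is bounded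
    by \<open>R\<^sub>0\<close>.\<close>

lemma Rf_Suc_budget:
  assumes lam: "lam > 0" and d: "real d > 0"
  shows "(if xcol y (Suc k) > 0 then Rf lam d I k y else 0) + Gf lam d I (Suc k) y + Rf lam d I (Suc k) y
         \<le> Rf lam d I k y"
proof (cases "xcol y (Suc k) > 0")
  case True
  then have "cols_upto (Suc k) y \<noteq> 0" using cols_upto_nonneg[of k] cols_upto_Suc[of k y] by simp
  then show ?thesis using True by (simp add: Gf_eq Rf_eq[of lam d I "Suc k"])
next
  case False
  then have x0: "xcol y (Suc k) = 0" using xcol_nonneg[of "Suc k"] by simp
  then have C: "cols_upto (Suc k) y = cols_upto k y" using cols_upto_Suc[of k y] by simp
  show ?thesis
  proof (cases "cols_upto k y = 0")
    case False2: False
    then show ?thesis using False C by (simp add: Gf_eq Rf_eq)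
  next
    case True
    have S: "weighted_load I (Suc k) y = weighted_load I k y + rows_upto I (Suc k) y"
      by (rule weighted_load_Suc)
    show ?thesis
    proof (cases "real d * weighted_load I (Suc k) y \<le> 1")
      case le: True
      have le0: "real d * weighted_load I k y \<le> 1" using le S rows_upto_nonneg[of "Suc k"] d
        by (smt (verit) mult_left_mono)
      have p1: "lam * (1 - real d * weighted_load I (Suc k) y) \<ge> 0" using le lam by simp
      have p0: "lam * (1 - real d * weighted_load I k y) \<ge> 0" using le0 lam by simp
      have e1: "Rf lam d I (Suc k) y = lam * (1 - real d * weighted_load I (Suc k) y)"
        using C True p1 by (simp add: Rf_eq)
      have e2: "Rf lam d I k y = lam * (1 - real d * weighted_load I k y)"
        using True p0 by (simp add: Rf_eq)
      have e3: "Gf lam d I (Suc k) y = lam * real d * rows_upto I (Suc k) y"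
        using C True le by (simp add: Gf_eq)
      show ?thesis unfolding e1 e2 e3 S using False by (simp add: algebra_simps)
    next
      case gt: False
      then have "lam * (1 - real d * weighted_load I (Suc k) y) \<le> 0" using lam
        by (simp add: mult_nonneg_nonpos)
      then show ?thesis using False C True gt Rf_nonneg[where d=d and k=k, OF lam]
        by (simp add: Gf_eq Rf_eq[of lam d I "Suc k"])
    qed
  qed
qed

lemma Rf_budget:
  assumes lam: "lam > 0" and d: "real d > 0"
  shows "(\<Sum>b=1..k. if xcol y b > 0 then Rf lam d I (b - 1) y else 0) + (\<Sum>j=1..k. Gf lam d I j y)
      + Rf lam d I k y
         \<le> Rf lam d I 0 y"
proof (induction k)
  case 0
  then show ?case by simp
next
  case (Suc k)
  have "(\<Sum>b=1..Suc k. if xcol y b > 0 then Rf lam d I (b - 1) y else 0)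
      + (\<Sum>j=1..Suc k. Gf lam d I j y) + Rf lam d I (Suc k) y
      = (\<Sum>b=1..k. if xcol y b > 0 then Rf lam d I (b - 1) y else 0) + (\<Sum>j=1..k. Gf lam d I j y)
        + ((if xcol y (Suc k) > 0 then Rf lam d I k y else 0) + Gf lam d I (Suc k) y + Rf lam d I (Suc k) y)"
    by simp
  also have "\<dots> \<le> (\<Sum>b=1..k. if xcol y b > 0 then Rf lam d I (b - 1) y else 0)
      + (\<Sum>j=1..k. Gf lam d I j y) + Rf lam d I k y"
    using Rf_Suc_budget[OF lam d, of k] by simp
  also have "\<dots> \<le> Rf lam d I 0 y" using Suc .
  finally show ?case .
qed

lemma sum_up_rates_le:
  assumes lam: "lam > 0"
  shows "(\<Sum>q\<in>up_cells I. rho lam d I (snd q - 1) (fst q) (snd q) y)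
       \<le> (\<Sum>b=1..I. if xcol y b > 0 then Rf lam d I (b - 1) y else 0)"
proof -
  define F where "F = {p \<in> idx I. 1 \<le> snd p}"
  have "(\<Sum>q\<in>up_cells I. rho lam d I (snd q - 1) (fst q) (snd q) y) \<le> (\<Sum>q\<in>F. rho lam d I (snd q - 1) (fst q) (snd q) y)"
    by (rule sum_mono2) (auto simp: F_def up_cells_def intro: rho_nonneg[OF lam])
  also have "(\<Sum>q\<in>F. rho lam d I (snd q - 1) (fst q) (snd q) y)
      = (\<Sum>b=1..I. \<Sum>a=0..b. rho lam d I (b - 1) a b y)"
  proof -
    have e: "F = (\<lambda>q. (snd q, fst q)) ` Sigma {1..I} (\<lambda>b. {0..b})"
      unfolding F_def idx_def by force
    have inj: "inj_on (\<lambda>q. (snd q, fst q)) (Sigma {1..I} (\<lambda>b. {0..b}))"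
      by (auto simp: inj_on_def)
    have "(\<Sum>q\<in>F. rho lam d I (snd q - 1) (fst q) (snd q) y)
        = (\<Sum>x\<in>Sigma {1..I} (\<lambda>b. {0..b}). rho lam d I (fst x - 1) (snd x) (fst x) y)"
      unfolding e sum.reindex[OF inj] by simp
    also have "\<dots> = (\<Sum>b=1..I. \<Sum>a=0..b. rho lam d I (b - 1) a b y)"
      using sum.Sigma[of "{1..I}" "\<lambda>b. {0..b}" "\<lambda>b a. rho lam d I (b - 1) a b y"]
        by (simp add: split_beta)
    finally show ?thesis .
  qed
  also have "\<dots> = (\<Sum>b=1..I. if xcol y b > 0 then Rf lam d I (b - 1) y else 0)"
  proof (intro sum.cong refl)
    fix b assume "b \<in> {1..I}"
    show "(\<Sum>a=0..b. rho lam d I (b - 1) a b y) = (if xcol y b > 0 then Rf lam d I (b - 1) y else 0)"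
    proof (cases "xcol y b > 0")
      case True
      have "(\<Sum>a=0..b. rho lam d I (b - 1) a b y) = Rf lam d I (b - 1) y * (\<Sum>a=0..b. y a b) / xcol y b"
        using True by (simp add: rho_def sum_divide_distrib sum_distrib_left)
      also have "(\<Sum>a=0..b. y a b) = xcol y b" unfolding xcol_def by simp
      finally show ?thesis using True by simp
    qed (simp add: rho_def)
  qed
  finally show ?thesis .
qed

lemma arrival_rates_le_Rf0:
  assumes lam: "lam > 0" and d: "real d > 0" and I: "2 \<le> I"
  shows "(\<Sum>q\<in>up_cells I. rho lam d I (snd q - 1) (fst q) (snd q) y)
      + (\<Sum>k\<in>{1..I-1}. Gf lam d I k y) \<le> Rf lam d I 0 y"
proof -
  have A: "(\<Sum>b=1..I-1. if xcol y b > 0 then Rf lam d I (b - 1) y else 0)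
      + (\<Sum>j=1..I-1. Gf lam d I j y) + Rf lam d I (I-1) y
         \<le> Rf lam d I 0 y" by (rule Rf_budget[OF lam d])
  have "(\<Sum>b=1..I. if xcol y b > 0 then Rf lam d I (b - 1) y else 0)
      = (\<Sum>b=1..I-1. if xcol y b > 0 then Rf lam d I (b - 1) y else 0)
          + (if xcol y I > 0 then Rf lam d I (I - 1) y else 0)"
  proof -
    have e: "{1..I} = insert I {1..I-1}" using I by auto
    have "I \<notin> {1..I-1}" using I by auto
    then show ?thesis unfolding e by (simp add: sum.insert add.commute)
  qed
  moreover have "(if xcol y I > 0 then Rf lam d I (I - 1) y else 0) \<le> Rf lam d I (I-1) y"
    using Rf_nonneg[OF lam] by auto
  ultimately show ?thesis using sum_up_rates_le[where d=d, OF lam] A by linarith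
qed

lemma rates_vanish_if_saturated:
  assumes "real d * xrow I y 0 \<ge> 1" and lam0: "lam \<ge> 0"
  shows "Rf lam d I k y = 0" "1 \<le> k \<Longrightarrow> Gf lam d I k y = 0" "rho lam d I k a b y = 0"
proof -
  have r0: "xrow I y 0 \<ge> 0" by (rule xrow_nonneg)
  have "real d * weighted_load I k y \<ge> real d * (real (k + 1) * xrow I y 0)"
    using weighted_load_ge_xrow0[of k] by (intro mult_left_mono) auto
  moreover have "real d * (real (k + 1) * xrow I y 0) \<ge> real d * xrow I y 0"
    using r0 by (simp add: mult_left_mono mult_right_mono algebra_simps)
  ultimately have S1: "real d * weighted_load I k y \<ge> 1" using assms by linarith
  then have "lam * (1 - real d * weighted_load I k y) \<le> 0" using lam0
    by (simp add: mult_nonneg_nonpos)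
  then show R: "Rf lam d I k y = 0" unfolding Rf_eq by auto
  show "1 \<le> k \<Longrightarrow> Gf lam d I k y = 0"
  proof -
    assume k: "1 \<le> k"
    have "real d * (real (k + 1) * xrow I y 0) \<ge> 2 * (real d * xrow I y 0)"
    proof -
      have "real (k + 1) \<ge> 2" using k by simp
      then have "real (k + 1) * (real d * xrow I y 0) \<ge> 2 * (real d * xrow I y 0)"
        using assms by (intro mult_right_mono) auto
      then show ?thesis by (simp add: algebra_simps)
    qed
    then have "real d * weighted_load I k y > 1" using weighted_load_ge_xrow0[of k] assms
      by (smt (verit, best) mult_left_mono of_nat_0_le_iff)
    then show ?thesis unfolding Gf_eq by auto
  qed
  show "rho lam d I k a b y = 0" unfolding rho_def using R by simp
qed

end

definition w_multi :: "nat \<times> nat \<Rightarrow> real" where "w_multi p = (if 2 \<le> fst p then 1 else 0)"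
definition w_queue :: "nat \<times> nat \<Rightarrow> real" where "w_queue p = real (fst p) - w_busy p"

lemma wmass_linear: "wmass I (\<lambda>p. a * w p + b * v p) y = a * wmass I w y + b * wmass I v y"
  unfolding wmass_def by (simp add: algebra_simps sum.distrib sum_distrib_left)

lemma wdrift_linear: "wdrift lam d I (\<lambda>p. a * w p + b * v p) y = a * wdrift lam d I w y
    + b * wdrift lam d I v y"
  unfolding wdrift_def by (simp add: algebra_simps sum.distrib sum_distrib_left)

lemma wdrift_cong: "(\<And>p. p \<in> idx I \<Longrightarrow> w p = v p) \<Longrightarrow> wdrift lam d I w y = wdrift lam d I v y"
  unfolding wdrift_def by (intro sum.cong) auto

lemma wdrift_one: "2 \<le> I \<Longrightarrow> wdrift lam d I (\<lambda>p. 1) y = 0"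
  unfolding wdrift_def using sum_weight_drift[of I "\<lambda>p. 1" lam d y] by simp

lemma simplexS_nonneg: "y \<in> simplexS I \<Longrightarrow> y i j \<ge> 0"
  unfolding simplexS_def by auto

lemma wmass_one: "y \<in> simplexS I \<Longrightarrow> wmass I (\<lambda>p. 1) y = 1"
  unfolding simplexS_def wmass_def by (simp add: sum_idx)

lemma wmass_mono:
  assumes "y \<in> simplexS I" "\<And>p. p \<in> idx I \<Longrightarrow> w p \<le> v p"
  shows "wmass I w y \<le> wmass I v y"
  unfolding wmass_def using assms simplexS_nonneg[OF assms(1)]
  by (intro sum_mono mult_right_mono) auto

lemma wmass_nonneg:
  assumes "y \<in> simplexS I" "\<And>p. p \<in> idx I \<Longrightarrow> w p \<ge> 0"
  shows "wmass I w y \<ge> 0"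
  using wmass_mono[OF assms(1), of "\<lambda>p. 0" w] assms(2) by (simp add: wmass_def)

lemma wmass_empty: "wmass I w_empty y = xrow I y 0"
proof -
  have "wmass I w_empty y = (\<Sum>i=0..I. \<Sum>j=i..I. (if i = 0 then 1 else 0) * y i j)"
    unfolding wmass_def sum_idx w_empty_def by simp
  also have "\<dots> = (\<Sum>i\<in>{0..I}. if i = 0 then (\<Sum>j=0..I. y 0 j) else 0)"
    by (intro sum.cong refl) auto
  also have "\<dots> = (\<Sum>j=0..I. y 0 j)" by (simp add: sum.delta)
  finally show ?thesis unfolding xrow_def by simp
qed

lemma w_busy_eq: "w_busy p = 1 * 1 + (-1) * w_empty p" unfolding w_busy_def w_empty_def by auto
lemma w_busy_split: "w_busy p = 1 * w_single p + 1 * w_multi p"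
  unfolding w_busy_def w_single_def w_multi_def by auto

context
  fixes y I
  assumes S: "y \<in> simplexS I"
begin


lemma wmass_busy_eq: "wmass I w_busy y = 1 - wmass I w_empty y"
  using wmass_linear[of I 1 "\<lambda>p. 1" "-1" w_empty y] wmass_one[OF S] w_busy_eq
    by (simp add: wmass_def)

lemma wmass_busy_split: "wmass I w_busy y = wmass I w_single y + wmass I w_multi y"
  using wmass_linear[of I 1 w_single 1 w_multi y] w_busy_split by (simp add: wmass_def)

lemma wmass_multi_nonneg: "wmass I w_multi y \<ge> 0"
  by (rule wmass_nonneg[OF S]) (simp add: w_multi_def)
lemma wmass_busy_nonneg: "wmass I w_busy y \<ge> 0" by (rule wmass_nonneg[OF S]) (simp add: w_busy_def)
lemma wmass_level_nonneg: "wmass I w_level y \<ge> 0"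
  by (rule wmass_nonneg[OF S]) (simp add: w_level_def)
lemma wmass_multi_le_queue: "wmass I w_multi y \<le> wmass I w_queue y"
  by (rule wmass_mono[OF S]) (auto simp: w_multi_def w_queue_def w_busy_def)
lemma wmass_queue_le_multi: "wmass I w_queue y \<le> real (I - 1) * wmass I w_multi y"
proof -
  have "wmass I w_queue y \<le> wmass I (\<lambda>p. real (I - 1) * w_multi p + 0 * w_multi p) y"
    by (rule wmass_mono[OF S]) (auto simp: w_multi_def w_queue_def w_busy_def idx_def of_nat_diff)
  then show ?thesis using wmass_linear[of I "real (I - 1)" w_multi 0 w_multi y] by simp
qed
lemma wmass_queue_nonneg: "wmass I w_queue y \<ge> 0" using wmass_multi_le_queue wmass_multi_nonneg
  by linarith
lemma wmass_busy_le_1: "wmass I w_busy y \<le> 1" using wmass_busy_eq wmass_nonneg[OF S, of w_empty]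
  by (auto simp: w_empty_def)
lemma wdrift_level_le:
  assumes I: "2 \<le> I" and lam: "lam > 0" and d: "real d > 0"
  shows "wdrift lam d I w_level y \<le> lam - wmass I w_busy y"
  using wdrift_level[OF I, of lam d y] arrival_rates_le_Rf0[where y=y and I=I, OF simplexS_nonneg[OF S] lam d I]
    by linarith

lemma wdrift_empty_le:
  assumes I: "2 \<le> I" and lam: "lam > 0"
  shows "wdrift lam d I w_empty y \<le> wmass I w_single y"
proof -
  have "(\<Sum>q\<in>up_cells I. if fst q = 0 then rho lam d I (snd q - 1) (fst q) (snd q) y else 0) \<ge> 0"
    using rho_nonneg[where y=y and I=I, OF simplexS_nonneg[OF S] lam] by (intro sum_nonneg) auto
  moreover have "Rf lam d I 0 y \<le> lam"
    using Rf_le_lam[where y=y and I=I, OF simplexS_nonneg[OF S] lam] by blast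
  ultimately show ?thesis using wdrift_empty[OF I, of lam d y] by linarith
qed

lemma wdrift_saturated:
  assumes I: "2 \<le> I" and lam: "lam > 0" and saturated: "real d * xrow I y 0 \<ge> 1"
  shows "wdrift lam d I w_empty y = wmass I w_single y - lam" "wdrift lam d I w_level y = lam
      - wmass I w_busy y"
proof -
  have z: "\<And>k. Rf lam d I k y = 0" "\<And>k. 1 \<le> k \<Longrightarrow> Gf lam d I k y = 0" "\<And>k a b. rho lam d I k a b y = 0"
    using rates_vanish_if_saturated[where y=y and I=I, OF simplexS_nonneg[OF S] saturated] lam
      by auto
  have zz: "(\<Sum>q\<in>up_cells I. if fst q = 0 then rho lam d I (snd q - 1) (fst q) (snd q) y else 0) = 0"
    by (intro sum.neutral ballI) (simp add: z(3))
  show "wdrift lam d I w_empty y = wmass I w_single y - lam" using wdrift_empty[OF I, of lam d y] zz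
    by (simp add: z)
  show "wdrift lam d I w_level y = lam - wmass I w_busy y" using wdrift_level[OF I, of lam d y]
    by (simp add: z)
qed

end

section \<open>Reaching the saturated regime\<close>

text \<open>Write \<open>B\<close>, \<open>L\<close> and \<open>W = L - B\<close> for the masses weighted by \<open>w_busy\<close>, \<open>w_level\<close>
  and \<open>w_queue\<close>, and \<open>\<delta> = 1 - 1/d - \<lambda>\<close>. While \<open>B \<le> \<lambda> + \<delta>\<close> we have \<open>d x\<^sub>0\<^sub>,\<^sub>\<cdot> \<ge> 1\<close>,
  no routing rate is active, and \<open>B' = \<lambda> - x\<^sub>1\<^sub>,\<^sub>\<cdot>\<close>, \<open>L' = \<lambda> - B\<close>, \<open>W' = -x\<^sub>\<ge>\<^sub>2\<close>.
  First \<open>B\<close> rises above \<open>\<lambda> - \<epsilon>\<^sub>0\<close> for good; then \<open>L + \<kappa> W\<close> decreases at a uniform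
  rate until \<open>W \<le> \<delta>/3\<close> and \<open>B \<le> \<lambda> + \<delta>/2\<close>; from then on \<open>W\<close> cannot grow and
  Gronwall's inequality keeps \<open>B \<le> \<lambda> + \<delta>/2\<close> forever.\<close>

locale fluid =
  fixes lam :: real and d I :: nat and x :: "real \<Rightarrow> nat \<Rightarrow> nat \<Rightarrow> real"
  assumes lam0: "0 < lam" and d2: "2 \<le> d" and I2: "2 \<le> I" and lamd: "lam < 1 - 1 / real d"
    and fluid: "fluid_solution lam d I x"
begin

lemma x_in_simplexS: "0 \<le> t \<Longrightarrow> x t \<in> simplexS I" using fluid
  unfolding fluid_solution_def by blast

lemma coord_abs_cont: "(i, j) \<in> idx I \<Longrightarrow> 0 \<le> s \<Longrightarrow> s \<le> T \<Longrightarrow> abs_cont_on_interval (\<lambda>t. x t i j) s T"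
  using fluid unfolding fluid_solution_def
    by (meson abs_cont_on_interval_subinterval order_refl order_trans)

lemma wmass_abs_cont: "0 \<le> s \<Longrightarrow> s \<le> T \<Longrightarrow> abs_cont_on_interval (\<lambda>t. wmass I w (x t)) s T"
  unfolding wmass_def by (intro abs_cont_on_interval_sum abs_cont_on_interval_cmult) (auto intro: coord_abs_cont)

lemma coord_deriv_AE: "AE t in lborel. 0 \<le> t \<longrightarrow> (\<forall>i j. (i, j) \<in> idx I \<longrightarrow>
        ((\<lambda>s. x s i j) has_real_derivative drift lam d I (x t) i j) (at t))"
  using fluid unfolding fluid_solution_def by blast

lemma wmass_has_derivative:
  assumes "\<forall>i j. (i, j) \<in> idx I \<longrightarrow> ((\<lambda>s. x s i j) has_real_derivative drift lam d I (x t) i j) (at t)"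
  shows "((\<lambda>s. wmass I w (x s)) has_real_derivative wdrift lam d I w (x t)) (at t)"
  unfolding wmass_def wdrift_def using assms
  by (intro DERIV_sum DERIV_cmult) (auto simp: split_beta)

definition "\<delta> = 1 - 1 / real d - lam"

lemma delta_pos: "\<delta> > 0" using lamd unfolding \<delta>_def by simp
lemma d_pos: "real d > 0" using d2 by simp

lemma saturated_if_busy_le: "y \<in> simplexS I \<Longrightarrow> wmass I w_busy y \<le> lam + \<delta> \<Longrightarrow> real d * xrow I y 0 \<ge> 1"
proof -
  assume S: "y \<in> simplexS I" and B: "wmass I w_busy y \<le> lam + \<delta>"
  have "xrow I y 0 \<ge> 1 / real d" using wmass_busy_eq[OF S] B wmass_empty unfolding \<delta>_def
    by simp
  then have "real d * xrow I y 0 \<ge> real d * (1 / real d)" using d_pos by (intro mult_left_mono) auto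
  then show ?thesis using d_pos by simp
qed

lemma wdrift_busy: "wdrift lam d I w_busy y = - wdrift lam d I w_empty y"
proof -
  have "wdrift lam d I w_busy y = wdrift lam d I (\<lambda>p. 1 * 1 + (-1) * w_empty p) y"
    by (rule wdrift_cong) (simp add: w_busy_def w_empty_def)
  also have "\<dots> = 1 * wdrift lam d I (\<lambda>p. 1) y + (-1) * wdrift lam d I w_empty y"
    by (rule wdrift_linear)
  finally show ?thesis using wdrift_one[OF I2] by simp
qed

lemma wdrift_queue: "wdrift lam d I w_queue y = wdrift lam d I w_level y - wdrift lam d I w_busy y"
proof -
  have "wdrift lam d I w_queue y = wdrift lam d I (\<lambda>p. 1 * w_level p + (-1) * w_busy p) y"
    by (rule wdrift_cong) (simp add: w_queue_def w_level_def)
  also have "\<dots> = 1 * wdrift lam d I w_level y + (-1) * wdrift lam d I w_busy y"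
    by (rule wdrift_linear)
  finally show ?thesis by simp
qed

lemma wdrift_if_busy_le:
  assumes S: "y \<in> simplexS I" and B: "wmass I w_busy y \<le> lam + \<delta>"
  shows "wdrift lam d I w_busy y = lam - wmass I w_single y" "wdrift lam d I w_level y = lam
      - wmass I w_busy y"
    "wdrift lam d I w_queue y = - wmass I w_multi y"
proof -
  have saturated: "real d * xrow I y 0 \<ge> 1" by (rule saturated_if_busy_le[OF S B])
  show 1: "wdrift lam d I w_busy y = lam - wmass I w_single y"
    using wdrift_saturated(1)[OF S I2 lam0 saturated] wdrift_busy by simp
  show 2: "wdrift lam d I w_level y = lam - wmass I w_busy y"
    using wdrift_saturated(2)[OF S I2 lam0 saturated] .
  show "wdrift lam d I w_queue y = - wmass I w_multi y"
    using wdrift_queue 1 2 wmass_busy_split[OF S]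
    by simp
qed

lemma wdrift_busy_ge_if_below:
  assumes t: "0 \<le> t" "wmass I w_busy (x t) < lam"
  shows "wdrift lam d I w_busy (x t) \<ge> lam - wmass I w_busy (x t)"
proof -
  have S: "x t \<in> simplexS I" using x_in_simplexS t by simp
  have "wmass I w_busy (x t) \<le> lam + \<delta>" using t delta_pos by simp
  then have "wdrift lam d I w_busy (x t) = lam - wmass I w_single (x t)"
    using wdrift_if_busy_le[OF S]
    by simp
  then show ?thesis using wmass_busy_split[OF S] wmass_multi_nonneg[OF S] by simp
qed

text \<open>Below \<open>\<lambda> - \<epsilon>\<close> the busy mass grows at rate at least \<open>\<epsilon>\<close>, and it never exceeds 1.\<close>

lemma busy_reaches:
  assumes eps: "\<epsilon> > 0"
  shows "\<exists>t0\<in>{0..2 / \<epsilon>}. wmass I w_busy (x t0) \<ge> lam - \<epsilon>"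
proof (rule ccontr)
  define T where "T = 2 / \<epsilon>"
  have T: "T \<ge> 0" "\<epsilon> * T = 2" using eps unfolding T_def by auto
  assume "\<not> (\<exists>t0\<in>{0..2 / \<epsilon>}. wmass I w_busy (x t0) \<ge> lam - \<epsilon>)"
  then have below: "\<forall>t\<in>{0..T}. wmass I w_busy (x t) < lam - \<epsilon>" unfolding T_def
    by (auto simp: not_le)
  have ac: "abs_cont_on_interval (\<lambda>t. - wmass I w_busy (x t)) 0 T"
    using abs_cont_on_interval_minus[OF wmass_abs_cont[of 0 T w_busy]] T by simp
  have ae: "AE t in lborel. t \<in> {0<..<T} \<longrightarrow>
      (\<exists>D. ((\<lambda>t. - wmass I w_busy (x t)) has_real_derivative D) (at t) \<and> D \<le> - \<epsilon>)"
    using coord_deriv_AE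
  proof (rule AE_mp, intro AE_I2 impI)
    fix t assume h: "0 \<le> t \<longrightarrow> (\<forall>i j. (i, j) \<in> idx I \<longrightarrow>
        ((\<lambda>s. x s i j) has_real_derivative drift lam d I (x t) i j) (at t))"
      and t: "t \<in> {0<..<T}"
    have der: "((\<lambda>s. wmass I w_busy (x s)) has_real_derivative wdrift lam d I w_busy (x t)) (at t)"
      using wmass_has_derivative h t by simp
    have "wmass I w_busy (x t) < lam - \<epsilon>" using below t by auto
    then have "wdrift lam d I w_busy (x t) \<ge> \<epsilon>" using wdrift_busy_ge_if_below[of t] t eps
      by auto
    then show "\<exists>D. ((\<lambda>t. - wmass I w_busy (x t)) has_real_derivative D) (at t) \<and> D \<le> - \<epsilon>"
      using DERIV_minus[OF der] by (intro exI[of _ "- wdrift lam d I w_busy (x t)"]) auto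
  qed
  have "- wmass I w_busy (x T) \<le> - wmass I w_busy (x 0) - \<epsilon> * (T - 0)"
    by (rule abs_cont_AE_DERIV_le_const[OF ac T(1) ae])
  moreover have "wmass I w_busy (x 0) \<ge> 0" using wmass_busy_nonneg[OF x_in_simplexS] by simp
  moreover have "wmass I w_busy (x T) \<le> 1" using wmass_busy_le_1[OF x_in_simplexS] T by simp
  ultimately show False using T by simp
qed

lemma eventually_busy_ge:
  assumes eps: "\<epsilon> > 0"
  shows "\<exists>t0\<ge>0. \<forall>t\<ge>t0. wmass I w_busy (x t) \<ge> lam - \<epsilon>"
proof -
  obtain t0 where t0: "t0 \<ge> 0" "wmass I w_busy (x t0) \<ge> lam - \<epsilon>"
    using busy_reaches[OF eps] by auto
  have "wmass I w_busy (x t) \<ge> lam - \<epsilon>" if "t0 \<le> t" for t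
  proof (rule abs_cont_barrier[of t0 "\<lambda>t. wmass I w_busy (x t)" "lam - \<epsilon>" t])
    show "\<And>T. t0 \<le> T \<Longrightarrow> abs_cont_on_interval (\<lambda>t. wmass I w_busy (x t)) t0 T"
      using wmass_abs_cont t0 by auto
    show "AE t in lborel. t0 < t \<and> wmass I w_busy (x t) < lam - \<epsilon> \<longrightarrow>
        (\<exists>D. ((\<lambda>t. wmass I w_busy (x t)) has_real_derivative D) (at t) \<and> D \<ge> 0)"
      using coord_deriv_AE
    proof (rule AE_mp, intro AE_I2 impI)
      fix t assume h: "0 \<le> t \<longrightarrow> (\<forall>i j. (i, j) \<in> idx I \<longrightarrow>
          ((\<lambda>s. x s i j) has_real_derivative drift lam d I (x t) i j) (at t))"
        and t: "t0 < t \<and> wmass I w_busy (x t) < lam - \<epsilon>"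
      then have "((\<lambda>s. wmass I w_busy (x s)) has_real_derivative wdrift lam d I w_busy (x t)) (at t)"
        using wmass_has_derivative t0 by simp
      moreover have "wdrift lam d I w_busy (x t) \<ge> 0"
        using wdrift_busy_ge_if_below[of t] t t0 eps by auto
      ultimately show "\<exists>D. ((\<lambda>t. wmass I w_busy (x t)) has_real_derivative D) (at t) \<and> D \<ge> 0"
        by blast
    qed
  qed (use t0 that in auto)
  then show ?thesis using t0 by blast
qed

text \<open>\<open>\<kappa> \<lambda> = \<delta>/4\<close> lets the decrease of \<open>L\<close> dominate when \<open>B > \<lambda> + \<delta>/2\<close>; when
  \<open>W > \<delta>/3\<close>, the gain \<open>\<kappa> x\<^sub>\<ge>\<^sub>2 \<ge> 2 \<epsilon>\<^sub>0\<close> beats the loss \<open>L' \<le> \<epsilon>\<^sub>0\<close> allowed by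
  \<open>B \<ge> \<lambda> - \<epsilon>\<^sub>0\<close>.\<close>

definition "kappa = \<delta> / (4 * lam)"
definition "eps0 = kappa * \<delta> / (6 * real (I - 1))"

lemma kappa_pos: "kappa > 0" unfolding kappa_def using delta_pos lam0 by simp
lemma eps0_pos: "eps0 > 0" unfolding eps0_def using kappa_pos delta_pos I2 by simp

lemma wdrift_lyapunov_le:
  assumes S: "y \<in> simplexS I" and Bl: "wmass I w_busy y \<ge> lam - eps0"
    and outside: "\<not> (wmass I w_queue y \<le> \<delta> / 3 \<and> wmass I w_busy y \<le> lam + \<delta> / 2)"
  shows "wdrift lam d I (\<lambda>p. 1 * w_level p + kappa * w_queue p) y \<le> - min (\<delta> / 4) eps0"
proof -
  have dPsi: "wdrift lam d I (\<lambda>p. 1 * w_level p + kappa * w_queue p) y = wdrift lam d I w_level y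
      + kappa * wdrift lam d I w_queue y"
    using wdrift_linear[of lam d I 1 w_level kappa w_queue y] by simp
  show ?thesis
  proof (cases "wmass I w_busy y > lam + \<delta> / 2")
    case True
    have dL: "wdrift lam d I w_level y \<le> lam - wmass I w_busy y"
      by (rule wdrift_level_le[OF S I2 lam0 d_pos])
    have d0: "wdrift lam d I w_empty y \<le> wmass I w_single y" by (rule wdrift_empty_le[OF S I2 lam0])
    have r1: "wmass I w_single y \<le> wmass I w_busy y"
      using wmass_busy_split[OF S] wmass_multi_nonneg[OF S] by simp
    have dW: "wdrift lam d I w_queue y \<le> lam" using wdrift_queue wdrift_busy dL d0 r1 by simp
    have "kappa * wdrift lam d I w_queue y \<le> kappa * lam" using dW kappa_pos
      by (simp add: mult_left_mono)
    also have "kappa * lam = \<delta> / 4" unfolding kappa_def using lam0 by simp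
    finally have "wdrift lam d I (\<lambda>p. 1 * w_level p + kappa * w_queue p) y \<le> - (\<delta> / 4)"
      using dPsi dL True by simp
    then show ?thesis by simp
  next
    case False
    then have B2: "wmass I w_busy y \<le> lam + \<delta> / 2" by simp
    then have W3: "wmass I w_queue y > \<delta> / 3" using outside by simp
    have BP: "wmass I w_busy y \<le> lam + \<delta>" using B2 delta_pos by simp
    have dL: "wdrift lam d I w_level y = lam - wmass I w_busy y"
      using wdrift_if_busy_le(2)[OF S BP] .
    have dW: "wdrift lam d I w_queue y = - wmass I w_multi y" using wdrift_if_busy_le(3)[OF S BP] .
    have I1: "real (I - 1) > 0" using I2 by simp
    have "wmass I w_queue y \<le> real (I - 1) * wmass I w_multi y" by (rule wmass_queue_le_multi[OF S])
    then have "\<delta> / 3 < real (I - 1) * wmass I w_multi y" using W3 by simp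
    then have r2: "wmass I w_multi y > \<delta> / (3 * real (I - 1))" using I1 by (simp add: field_simps)
    have "kappa * wmass I w_multi y \<ge> kappa * (\<delta> / (3 * real (I - 1)))"
      using r2 kappa_pos by (intro mult_left_mono) auto
    moreover have "kappa * (\<delta> / (3 * real (I - 1))) = 2 * eps0" unfolding eps0_def using I1
      by (simp add: field_simps)
    ultimately have "wdrift lam d I (\<lambda>p. 1 * w_level p + kappa * w_queue p) y \<le> eps0 - 2 * eps0"
      using dPsi dL dW Bl by simp
    then show ?thesis by simp
  qed
qed

lemma reaches_calm_region:
  assumes t0: "0 \<le> t0" and Bl: "\<forall>t\<ge>t0. wmass I w_busy (x t) \<ge> lam - eps0"
  shows "\<exists>t1\<ge>t0. wmass I w_queue (x t1) \<le> \<delta> / 3 \<and> wmass I w_busy (x t1) \<le> lam + \<delta> / 2"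
proof (rule ccontr)
  assume nK: "\<not> (\<exists>t1\<ge>t0. wmass I w_queue (x t1) \<le> \<delta> / 3 \<and> wmass I w_busy (x t1) \<le> lam + \<delta> / 2)"
  define psi where "psi = (\<lambda>p. 1 * w_level p + kappa * w_queue p)"
  define c0 where "c0 = min (\<delta> / 4) eps0"
  have c0: "c0 > 0" unfolding c0_def using delta_pos eps0_pos by simp
  define T where "T = t0 + (wmass I psi (x t0) + 1) / c0"
  have psinn: "wmass I psi (x t) \<ge> 0" if "0 \<le> t" for t
  proof -
    have "wmass I psi (x t) = 1 * wmass I w_level (x t) + kappa * wmass I w_queue (x t)"
      unfolding psi_def by (rule wmass_linear)
    then show ?thesis using wmass_level_nonneg[OF x_in_simplexS[OF that]] wmass_queue_nonneg[OF x_in_simplexS[OF that]] kappa_pos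
      by simp
  qed
  have T: "t0 \<le> T" unfolding T_def using psinn[OF t0] c0 by simp
  have ac: "abs_cont_on_interval (\<lambda>t. wmass I psi (x t)) t0 T" using wmass_abs_cont t0 T by simp
  have ae: "AE t in lborel. t \<in> {t0<..<T}
      \<longrightarrow> (\<exists>D. ((\<lambda>t. wmass I psi (x t)) has_real_derivative D) (at t) \<and> D \<le> - c0)"
    using coord_deriv_AE
  proof (rule AE_mp, intro AE_I2 impI)
    fix t assume h: "0 \<le> t \<longrightarrow> (\<forall>i j. (i, j) \<in> idx I \<longrightarrow> ((\<lambda>s. x s i j) has_real_derivative drift lam d I (x t) i j) (at t))"
      and t: "t \<in> {t0<..<T}"
    have t0': "0 \<le> t" using t t0 by auto
    have der: "((\<lambda>s. wmass I psi (x s)) has_real_derivative wdrift lam d I psi (x t)) (at t)"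
      using wmass_has_derivative h t0' by simp
    have "wdrift lam d I psi (x t) \<le> - c0" unfolding psi_def c0_def
      by (rule wdrift_lyapunov_le[OF x_in_simplexS[OF t0']]) (use Bl nK t in auto)
    then show "\<exists>D. ((\<lambda>t. wmass I psi (x t)) has_real_derivative D) (at t) \<and> D \<le> - c0"
      using der by blast
  qed
  have "wmass I psi (x T) \<le> wmass I psi (x t0) - c0 * (T - t0)"
    by (rule abs_cont_AE_DERIV_le_const[OF ac T ae])
  also have "c0 * (T - t0) = wmass I psi (x t0) + 1" unfolding T_def using c0 by simp
  finally show False using psinn[of T] t0 T by simp
qed

lemma queue_le_while_busy_le:
  assumes t1: "0 \<le> t1" "t1 \<le> \<tau>" and busy: "\<forall>s\<in>{t1..\<tau>}. wmass I w_busy (x s) \<le> lam + \<delta>"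
  shows "wmass I w_queue (x \<tau>) \<le> wmass I w_queue (x t1)"
proof (rule abs_cont_AE_DERIV_nonpos_imp_le[OF wmass_abs_cont[OF t1] t1(2)])
  show "AE t in lborel. t \<in> {t1<..<\<tau>} \<longrightarrow>
      (\<exists>D. ((\<lambda>t. wmass I w_queue (x t)) has_real_derivative D) (at t) \<and> D \<le> 0)"
    using coord_deriv_AE
  proof (rule AE_mp, intro AE_I2 impI)
    fix t assume h: "0 \<le> t \<longrightarrow> (\<forall>i j. (i, j) \<in> idx I \<longrightarrow>
        ((\<lambda>s. x s i j) has_real_derivative drift lam d I (x t) i j) (at t))"
      and t: "t \<in> {t1<..<\<tau>}"
    then have S: "x t \<in> simplexS I" using t1 x_in_simplexS by auto
    have "((\<lambda>s. wmass I w_queue (x s)) has_real_derivative wdrift lam d I w_queue (x t)) (at t)"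
      using wmass_has_derivative h t t1 by simp
    moreover have "wdrift lam d I w_queue (x t) = - wmass I w_multi (x t)"
      using wdrift_if_busy_le(3)[OF S] busy t by auto
    ultimately show "\<exists>D. ((\<lambda>t. wmass I w_queue (x t)) has_real_derivative D) (at t) \<and> D \<le> 0"
      using wmass_multi_nonneg[OF S] by auto
  qed
qed

text \<open>While \<open>W \<le> \<delta>/3\<close>, the excess \<open>B - (\<lambda> + \<delta>/3)\<close> of the busy mass satisfies \<open>F' \<le> -F\<close>.\<close>

lemma busy_le_while_queue_small:
  assumes t1: "0 \<le> t1" "t1 \<le> T" and B1: "wmass I w_busy (x t1) \<le> lam + \<delta> / 2"
    and calm: "\<forall>s\<in>{t1..T}. wmass I w_busy (x s) \<le> lam + \<delta> \<and> wmass I w_queue (x s) \<le> \<delta> / 3"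
  shows "wmass I w_busy (x T) \<le> lam + \<delta> / 2"
proof -
  define F where "F t = wmass I w_busy (x t) - (lam + \<delta> / 3)" for t
  have acF: "abs_cont_on_interval F t1 T"
    unfolding F_def
    by (intro abs_cont_on_interval_diff wmass_abs_cont[OF t1] abs_cont_on_interval_const)
  have aeF: "AE t in lborel. t \<in> {t1<..<T} \<longrightarrow>
      (\<exists>D. (F has_real_derivative D) (at t) \<and> D \<le> - 1 * F t + 0 * exp (- (1/2) * (t - t1)))"
    using coord_deriv_AE
  proof (rule AE_mp, intro AE_I2 impI)
    fix t assume h: "0 \<le> t \<longrightarrow> (\<forall>i j. (i, j) \<in> idx I \<longrightarrow>
        ((\<lambda>s. x s i j) has_real_derivative drift lam d I (x t) i j) (at t))"
      and t: "t \<in> {t1<..<T}"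
    then have S: "x t \<in> simplexS I" using t1 x_in_simplexS by auto
    have "((\<lambda>s. wmass I w_busy (x s)) has_real_derivative wdrift lam d I w_busy (x t)) (at t)"
      using wmass_has_derivative h t t1 by simp
    then have derF: "(F has_real_derivative wdrift lam d I w_busy (x t)) (at t)"
      unfolding F_def using DERIV_diff[OF _ DERIV_const] by fastforce
    have "wdrift lam d I w_busy (x t) = lam - wmass I w_single (x t)"
      using wdrift_if_busy_le(1)[OF S] calm t by auto
    moreover have "wmass I w_queue (x t) \<le> \<delta> / 3" using calm t by auto
    then have "wmass I w_multi (x t) \<le> \<delta> / 3" using wmass_multi_le_queue[OF S] by simp
    ultimately have "wdrift lam d I w_busy (x t) \<le> - 1 * F t + 0 * exp (- (1/2) * (t - t1))"
      unfolding F_def using wmass_busy_split[OF S] by simp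
    then show "\<exists>D. (F has_real_derivative D) (at t) \<and> D \<le> - 1 * F t + 0 * exp (- (1/2) * (t - t1))"
      using derF by blast
  qed
  have "F T \<le> (max (F t1) 0 + 0 / (1 - 1/2)) * exp (- (1/2) * (T - t1))"
    by (rule abs_cont_gronwall_exp[OF acF t1(2) _ _ _ aeF]) auto
  also have "\<dots> \<le> max (F t1) 0"
    using t1 by (simp add: mult_left_le)
  also have "\<dots> \<le> \<delta> / 6" unfolding F_def using B1 delta_pos by (simp add: max_def)
  finally show ?thesis unfolding F_def by simp
qed

lemma busy_stays_le:
  assumes t1: "0 \<le> t1" and W1: "wmass I w_queue (x t1) \<le> \<delta> / 3"
    and B1: "wmass I w_busy (x t1) \<le> lam + \<delta> / 2"
  shows "\<forall>t\<ge>t1. wmass I w_busy (x t) \<le> lam + \<delta> / 2"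
proof (intro allI impI)
  fix t assume "t1 \<le> t"
  show "wmass I w_busy (x t) \<le> lam + \<delta> / 2"
  proof (rule continuous_bootstrap[of t1 "\<lambda>t. wmass I w_busy (x t)" "lam + 3 * \<delta> / 4" "lam + \<delta> / 2" t])
    show "t1 \<le> t" by fact
    show "\<And>T. t1 \<le> T \<Longrightarrow> continuous_on {t1..T} (\<lambda>t. wmass I w_busy (x t))"
      using wmass_abs_cont t1 abs_cont_on_interval_imp_continuous_on by blast
    show "wmass I w_busy (x t1) < lam + 3 * \<delta> / 4" "lam + \<delta> / 2 < lam + 3 * \<delta> / 4"
      using B1 delta_pos by simp_all
    fix T assume T: "t1 \<le> T" and below: "\<forall>s\<in>{t1..T}. wmass I w_busy (x s) \<le> lam + 3 * \<delta> / 4"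
    then have busy: "\<forall>s\<in>{t1..T}. wmass I w_busy (x s) \<le> lam + \<delta>" using delta_pos
      by force
    have "wmass I w_queue (x s) \<le> \<delta> / 3" if "s \<in> {t1..T}" for s
      using queue_le_while_busy_le[of t1 s] busy that t1 W1 by force
    with busy show "wmass I w_busy (x T) \<le> lam + \<delta> / 2"
      by (intro busy_le_while_queue_small[OF t1 T B1]) auto
  qed
qed

end

section \<open>Exponential convergence in the saturated regime\<close>

context
  fixes y :: "nat \<Rightarrow> nat \<Rightarrow> real" and lam :: real and d I :: nat
  assumes S: "y \<in> simplexS I" and I2: "2 \<le> I" and lam0: "lam > 0"
    and saturated: "1 \<le> real d * xrow I y 0"
begin

lemma rates_vanish: "Rf lam d I k y = 0" "1 \<le> k \<Longrightarrow> Gf lam d I k y = 0" "rho lam d I k a b y = 0"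
  using rates_vanish_if_saturated[OF simplexS_nonneg[OF S] saturated] lam0 by auto

lemma drift_less_saturated:
  assumes "i < j"
  shows "drift lam d I y i j = - ((if i > 0 then 1 else 0) + lam * real d) * (y i j - xstar lam d i j)
    + (y (i + 1) j - xstar lam d (i + 1) j)"
proof -
  have "real d \<noteq> 0"
  proof
    assume "real d = 0"
    then show False using saturated by simp
  qed
  then have "((if i > 0 then 1 else 0) + lam * real d) * xstar lam d i j = xstar lam d (i + 1) j"
    using assms by (auto simp: xstar_def)
  then show ?thesis using assms by (simp add: drift_less rates_vanish algebra_simps)
qed

lemma drift_diag_saturated:
  assumes "1 \<le> i" "i \<le> I - 1"
  shows "drift lam d I y i i = - (y i i - xstar lam d i i)
    + lam * real d * (\<Sum>k\<in>{i<..I}. y i k - xstar lam d i k)"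
proof -
  have xrow: "xrow I y i - y i i = (\<Sum>k\<in>{i<..I}. y i k)"
    using xrow_eq_diag_plus[of i I y] assms I2 by simp
  have "(\<Sum>k\<in>{i<..I}. xstar lam d i k) = 0"
    using assms by (intro sum.neutral) (auto simp: xstar_def)
  then have sum_dev: "(\<Sum>k\<in>{i<..I}. y i k - xstar lam d i k) = xrow I y i - y i i"
    using xrow by (simp add: sum_subtractf)
  show ?thesis
  proof (cases "i = 1")
    case True
    have "Gf lam d I 1 y = 0" by (rule rates_vanish(2)) simp
    then have "drift lam d I y 1 1 = - y 1 1 + lam * real d * (xrow I y 1 - y 1 1) + lam"
      unfolding drift_1_1 rates_vanish(1) rates_vanish(3) by simp
    then show ?thesis using sum_dev unfolding True by (simp add: xstar_def)
  next
    case False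
    then show ?thesis using assms xrow by (simp add: drift_diag rates_vanish sum_dev xstar_def)
  qed
qed

lemma drift_I_I_saturated: "drift lam d I y I I = - (y I I - xstar lam d I I)"
  using I2 by (simp add: drift_I_I rates_vanish xstar_def)

end

lemma xstar_bounds:
  assumes "0 < lam" "lam < 1 - 1 / real d"
  shows "0 \<le> xstar lam d i j" "xstar lam d i j \<le> 1"
proof -
  have "0 \<le> 1 / real d" by simp
  then have "0 \<le> 1 - lam - 1 / real d" "1 - lam - 1 / real d \<le> 1" "1 / real d \<le> 1" "lam \<le> 1"
    using assms by linarith+
  then show "0 \<le> xstar lam d i j" "xstar lam d i j \<le> 1"
    using assms(1) unfolding xstar_def by (simp_all split: if_split)
qed

definition coord_rank :: "nat \<Rightarrow> nat \<Rightarrow> nat \<Rightarrow> nat" where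
  "coord_rank I i j = 2 * (I - i) + (if i = j then 1 else 0)"

lemma exp_decaying_imp_exp_bound:
  assumes "exp_decaying f s" "s \<ge> 0" and bounded: "\<And>t. 0 \<le> t \<Longrightarrow> t \<le> s \<Longrightarrow> \<bar>f t\<bar> \<le> M"
  shows "\<exists>\<alpha>>0. \<exists>\<beta>>0. \<forall>t\<ge>0. \<bar>f t\<bar> \<le> \<alpha> * exp (- \<beta> * t)"
proof -
  obtain C \<beta> where \<beta>: "\<beta> > 0" and C: "C \<ge> 0"
    and decay: "\<And>t. t \<ge> s \<Longrightarrow> \<bar>f t\<bar> \<le> C * exp (- \<beta> * (t - s))"
    using exp_decayingE[OF assms(1)] by blast
  define \<alpha> where "\<alpha> = (C + \<bar>M\<bar>) * exp (\<beta> * s) + 1"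
  have "\<bar>f t\<bar> \<le> \<alpha> * exp (- \<beta> * t)" if t: "t \<ge> 0" for t
  proof -
    have shift: "exp (\<beta> * s) * exp (- \<beta> * t) = exp (\<beta> * (s - t))"
      by (simp add: mult_exp_exp algebra_simps)
    have "\<bar>f t\<bar> \<le> (C + \<bar>M\<bar>) * exp (\<beta> * (s - t))"
    proof (cases "t \<ge> s")
      case True
      have "exp (- \<beta> * (t - s)) = exp (\<beta> * (s - t))" by (simp add: algebra_simps)
      then have "C * exp (- \<beta> * (t - s)) \<le> (C + \<bar>M\<bar>) * exp (\<beta> * (s - t))"
        by (simp add: mult_right_mono)
      then show ?thesis using decay[OF True] by linarith
    next
      case False
      have "1 \<le> exp (\<beta> * (s - t))" using False \<beta> by simp
      then have "\<bar>M\<bar> \<le> \<bar>M\<bar> * exp (\<beta> * (s - t))"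
        using mult_left_mono[of 1 "exp (\<beta> * (s - t))" "\<bar>M\<bar>"] by simp
      also have "\<dots> \<le> (C + \<bar>M\<bar>) * exp (\<beta> * (s - t))"
        using C by (intro mult_right_mono) auto
      finally have "\<bar>M\<bar> \<le> (C + \<bar>M\<bar>) * exp (\<beta> * (s - t))" .
      then show ?thesis using bounded[OF t] False by linarith
    qed
    also have "\<dots> \<le> \<alpha> * exp (- \<beta> * t)"
      unfolding \<alpha>_def using shift by (simp add: algebra_simps)
    finally show ?thesis .
  qed
  moreover have "\<alpha> > 0" unfolding \<alpha>_def using C by (simp add: add_nonneg_pos)
  ultimately show ?thesis using \<beta> by blast
qed

context fluid
begin

lemma eventually_saturated: "\<exists>t1\<ge>0. \<forall>t\<ge>t1. 1 \<le> real d * xrow I (x t) 0"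
proof -
  obtain t0 where t0: "t0 \<ge> 0" "\<forall>t\<ge>t0. wmass I w_busy (x t) \<ge> lam - eps0"
    using eventually_busy_ge[OF eps0_pos] by blast
  obtain t1 where t1: "t1 \<ge> t0" "wmass I w_queue (x t1) \<le> \<delta> / 3" "wmass I w_busy (x t1) \<le> lam + \<delta> / 2"
    using reaches_calm_region[OF t0] by blast
  have busy: "\<forall>t\<ge>t1. wmass I w_busy (x t) \<le> lam + \<delta> / 2"
    using busy_stays_le[of t1] t1 t0 by simp
  have "1 \<le> real d * xrow I (x t) 0" if t: "t \<ge> t1" for t
  proof -
    have "0 \<le> t" using t t0 t1 by simp
    moreover have "wmass I w_busy (x t) \<le> lam + \<delta>" using busy t delta_pos by force
    ultimately show ?thesis using saturated_if_busy_le[OF x_in_simplexS] by blast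
  qed
  then show ?thesis using t0 t1 by (intro exI[of _ t1]) auto
qed

definition dev :: "nat \<Rightarrow> nat \<Rightarrow> real \<Rightarrow> real" where
  "dev i j t = x t i j - xstar lam d i j"

lemma dev_exp_decaying_if_affine:
  assumes t1: "t1 \<ge> 0" and ij: "(i, j) \<in> idx I" and a: "a > 0" and g: "exp_decaying g t1"
    and affine: "\<And>t. t > t1 \<Longrightarrow> drift lam d I (x t) i j = - a * dev i j t + g t"
  shows "exp_decaying (dev i j) t1"
proof (rule exp_decaying_linear_ODE[OF _ a g])
  show "abs_cont_on_interval (dev i j) t1 T" if "t1 \<le> T" for T
    unfolding dev_def using coord_abs_cont[OF ij t1 that]
    by (intro abs_cont_on_interval_diff abs_cont_on_interval_const)
  show "AE t in lborel. t1 < t \<longrightarrow> (dev i j has_real_derivative - a * dev i j t + g t) (at t)"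
    using coord_deriv_AE
  proof (rule AE_mp, intro AE_I2 impI)
    fix t assume "0 \<le> t \<longrightarrow> (\<forall>i j. (i, j) \<in> idx I \<longrightarrow>
        ((\<lambda>s. x s i j) has_real_derivative drift lam d I (x t) i j) (at t))" and t: "t1 < t"
    then have "((\<lambda>s. x s i j) has_real_derivative drift lam d I (x t) i j) (at t)"
      using ij t1 by auto
    then have "(dev i j has_real_derivative drift lam d I (x t) i j) (at t)"
      unfolding dev_def by (auto intro!: derivative_eq_intros)
    then show "(dev i j has_real_derivative - a * dev i j t + g t) (at t)"
      using affine[OF t] by simp
  qed
qed

text \<open>In the saturated regime the drift of a coordinate only involves coordinates of smaller
  rank, so decay propagates by induction on \<open>coord_rank\<close>.\<close>

lemma dev_exp_decaying:
  assumes t1: "t1 \<ge> 0" and saturated: "\<forall>t\<ge>t1. 1 \<le> real d * xrow I (x t) 0"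
  shows "(i, j) \<in> idx I \<Longrightarrow> (i, j) \<noteq> (0, 0) \<Longrightarrow> exp_decaying (dev i j) t1"
proof (induction "coord_rank I i j" arbitrary: i j rule: less_induct)
  case less
  have S: "x t \<in> simplexS I" "1 \<le> real d * xrow I (x t) 0" if "t > t1" for t
    using that t1 saturated x_in_simplexS by auto
  consider (offdiag) "i < j" | (diag) "i = j" "1 \<le> i" "i \<le> I - 1" | (corner) "i = I" "j = I"
    using less.prems I2 by fastforce
  then show ?case
  proof cases
    case offdiag
    have decay: "exp_decaying (dev (i + 1) j) t1"
      using offdiag less.prems by (intro less.hyps) (auto simp: coord_rank_def)
    have rate: "(if i > 0 then 1 else 0) + lam * real d > 0"
      using d_pos lam0 by (simp add: add_pos_nonneg)
    show ?thesis
    proof (rule dev_exp_decaying_if_affine[OF t1 less.prems(1) rate decay])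
      fix t assume "t > t1"
      then show "drift lam d I (x t) i j = - ((if i > 0 then 1 else 0) + lam * real d) * dev i j t
          + dev (i + 1) j t"
        using drift_less_saturated[OF S(1) I2 lam0 S(2) offdiag] unfolding dev_def by blast
    qed
  next
    case diag
    have "exp_decaying (dev i k) t1" if "k \<in> {i<..I}" for k
      using that diag by (intro less.hyps) (auto simp: coord_rank_def)
    then have "exp_decaying (\<lambda>t. lam * real d * (\<Sum>k\<in>{i<..I}. dev i k t)) t1"
      by (intro exp_decaying_cmult exp_decaying_sum) auto
    then show ?thesis
    proof (rule dev_exp_decaying_if_affine[OF t1 less.prems(1) zero_less_one])
      fix t assume "t > t1"
      then show "drift lam d I (x t) i j = - 1 * dev i j t + lam * real d * (\<Sum>k\<in>{i<..I}. dev i k t)"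
        using drift_diag_saturated[OF S(1) I2 lam0 S(2) diag(2,3)] diag(1) unfolding dev_def by simp
    qed
  next
    case corner
    show ?thesis
    proof (rule dev_exp_decaying_if_affine[OF t1 less.prems(1) zero_less_one exp_decaying_zero])
      fix t assume "t > t1"
      then show "drift lam d I (x t) i j = - 1 * dev i j t + 0"
        using drift_I_I_saturated[OF S(1) I2 lam0 S(2)] corner unfolding dev_def by simp
    qed
  qed
qed

lemma sum_dev_eq_0: "t \<ge> 0 \<Longrightarrow> (\<Sum>p\<in>idx I. dev (fst p) (snd p) t) = 0"
proof -
  assume t: "t \<ge> 0"
  have "(\<Sum>p\<in>idx I. xstar lam d (fst p) (snd p))
      = (\<Sum>p\<in>{(0, 0), (0, 1), (1, 1)}. xstar lam d (fst p) (snd p))"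
    by (rule sum.mono_neutral_right) (use I2 in \<open>auto simp: xstar_def\<close>)
  then have "(\<Sum>p\<in>idx I. xstar lam d (fst p) (snd p)) = 1" by (simp add: xstar_def)
  moreover have "(\<Sum>p\<in>idx I. x t (fst p) (snd p)) = 1"
    using wmass_one[OF x_in_simplexS[OF t]] unfolding wmass_def by simp
  ultimately show ?thesis unfolding dev_def by (simp add: sum_subtractf)
qed

lemma sum_abs_dev_exp_decaying:
  assumes t1: "t1 \<ge> 0" and saturated: "\<forall>t\<ge>t1. 1 \<le> real d * xrow I (x t) 0"
  shows "exp_decaying (\<lambda>t. \<Sum>p\<in>idx I. \<bar>dev (fst p) (snd p) t\<bar>) t1"
proof (intro exp_decaying_sum exp_decaying_abs)
  fix p assume p: "p \<in> idx I"
  have others: "exp_decaying (dev (fst q) (snd q)) t1" if "q \<in> idx I - {(0, 0)}" for q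
    using that dev_exp_decaying[OF t1 saturated, of "fst q" "snd q"] by auto
  show "exp_decaying (dev (fst p) (snd p)) t1"
  proof (cases "p = (0, 0)")
    case True
    have "dev 0 0 t = (-1) * (\<Sum>q\<in>idx I - {(0, 0)}. dev (fst q) (snd q) t)" if "t \<ge> t1" for t
      using sum_dev_eq_0[of t] sum.remove[of "idx I" "(0, 0)" "\<lambda>q. dev (fst q) (snd q) t"] that t1
      by simp
    moreover have "exp_decaying (\<lambda>t. (-1) * (\<Sum>q\<in>idx I - {(0, 0)}. dev (fst q) (snd q) t)) t1"
      using others by (intro exp_decaying_cmult exp_decaying_sum) auto
    ultimately show ?thesis using True exp_decaying_cong by auto
  qed (use others p in auto)
qed (simp)

lemma abs_dev_le_1: "t \<ge> 0 \<Longrightarrow> p \<in> idx I \<Longrightarrow> \<bar>dev (fst p) (snd p) t\<bar> \<le> 1"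
proof -
  assume t: "t \<ge> 0" and p: "p \<in> idx I"
  have S: "x t \<in> simplexS I" using x_in_simplexS[OF t] .
  have "x t (fst p) (snd p) \<le> (\<Sum>q\<in>idx I. x t (fst q) (snd q))"
    using member_le_sum[OF p, of "\<lambda>q. x t (fst q) (snd q)"] simplexS_nonneg[OF S] by auto
  also have "\<dots> = 1" using wmass_one[OF S] unfolding wmass_def by simp
  finally have "0 \<le> x t (fst p) (snd p)" "x t (fst p) (snd p) \<le> 1"
    using simplexS_nonneg[OF S] by auto
  moreover have "0 \<le> xstar lam d (fst p) (snd p)" "xstar lam d (fst p) (snd p) \<le> 1"
    using xstar_bounds[OF lam0 lamd] by auto
  ultimately show ?thesis unfolding dev_def by linarith
qed

lemma state_dist_le_sum_abs_dev: "state_dist I (x t) (xstar lam d) \<le> (\<Sum>p\<in>idx I. \<bar>dev (fst p) (snd p) t\<bar>)"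
proof -
  have "state_dist I (x t) (xstar lam d) = L2_set (\<lambda>p. dev (fst p) (snd p) t) (idx I)"
    unfolding state_dist_def L2_set_def dev_def by (simp add: split_beta)
  also have "\<dots> \<le> (\<Sum>p\<in>idx I. \<bar>dev (fst p) (snd p) t\<bar>)"
    by (rule L2_set_le_sum_abs)
  finally show ?thesis .
qed

end

theorem theorem3:
  fixes lam :: real and d I :: nat and x :: "real \<Rightarrow> nat \<Rightarrow> nat \<Rightarrow> real"
  assumes "0 < lam" "lam < 1" "d \<ge> 2" "I > 1"
    and "lam < 1 - 1 / real d"
    and "fluid_solution lam d I x"
  shows "\<exists>\<alpha>>0. \<exists>\<beta>>0. \<forall>t\<ge>0. state_dist I (x t) (xstar lam d) \<le> \<alpha> * exp (- \<beta> * t)"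
proof -
  interpret fluid lam d I x using assms by unfold_locales auto
  obtain t1 where t1: "t1 \<ge> 0" "\<forall>t\<ge>t1. 1 \<le> real d * xrow I (x t) 0"
    using eventually_saturated by blast
  let ?err = "\<lambda>t. \<Sum>p\<in>idx I. \<bar>dev (fst p) (snd p) t\<bar>"
  have "\<bar>?err t\<bar> \<le> real (card (idx I))" if "t \<ge> 0" for t
    using sum_mono[of "idx I" "\<lambda>p. \<bar>dev (fst p) (snd p) t\<bar>" "\<lambda>p. 1"] abs_dev_le_1[OF that]
    by (simp add: sum_nonneg)
  then obtain \<alpha> \<beta> where "\<alpha> > 0" "\<beta> > 0" "\<forall>t\<ge>0. \<bar>?err t\<bar> \<le> \<alpha> * exp (- \<beta> * t)"
    using exp_decaying_imp_exp_bound[OF sum_abs_dev_exp_decaying[OF t1] t1(1)] by blast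
  then show ?thesis
    using state_dist_le_sum_abs_dev by (meson abs_ge_self order_trans)
qed


end
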